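(* Let $U_2$ be a unitary matrix with real entries having a unique (up to scalars) eigenvector $|\phi_0\rangle$ of eigenvalue $1$, chosen with real entries and norm $1$; let $|\mu\rangle$ be a unit vector with real entries, $U_1=I-2|\mu\rangle\langle\mu|$, $U=U_2U_1$, $|\tilde\phi_0\rangle=|\phi_0\rangle-\langle\mu|\phi_0\rangle|\mu\rangle$, and $\varepsilon\in(0,1)$. Assume that all eigenvalues $e^{i\alpha}$ of $U$ satisfy $|\alpha|\le\pi/2$. Then for every $T\ge\mathsf{QHT}_\varepsilon(U_2,|\mu\rangle)$, the procedure $\mathbf{Rotate}(U,1/T,\varepsilon)$ maps $|\tilde\phi_0\rangle$ to a state at Euclidean distance $O(\sqrt{\varepsilon})$ from the $U$-rotation of $|\tilde\phi_0\rangle$. Moreover, the number of applications of $\text{c-}U$ is $O(\log(1/\varepsilon)\cdot T)$.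
   Context: Decompose $|\tilde\phi_0\rangle=\delta_0|w_0\rangle+\sum_{1\le j\le J}\delta_j(|w_j^+\rangle+|w_j^-\rangle)+\delta_{-1}|w_{-1}\rangle$ with real coefficients, where $|w_0\rangle$ (resp. $|w_{-1}\rangle$) is a unit eigenvector of $U$ of eigenvalue $1$ (resp. $-1$) and $|w_j^\pm\rangle$ are unit eigenvectors of eigenvalues $e^{\pm i\alpha_j}$, $0<\alpha_j<\pi$, $|w_j^-\rangle=\overline{|w_j^+\rangle}$. The $U$-rotation of $|\tilde\phi_0\rangle$ is $\delta_0|w_0\rangle+\sum_j\delta_j(|w_j^+\rangle-|w_j^-\rangle)+\delta_{-1}|w_{-1}\rangle$. $\mathit{QH}$ takes value $1/\alpha_j$ with probability $2\delta_j^2$, $1/\pi$ with probability $\delta_{-1}^2$, and $0$ otherwise; $\mathsf{QHT}_\varepsilon(U_2,|\mu\rangle)=\min\{y:\Pr[\mathit{QH}>y]\le\varepsilon\}$. $\mathbf{Estimate}$ is the standard phase estimation circuit for $U$ with precision $\Delta$ (on an eigenvector with eigenphase $\alpha\in(-\pi,\pi]$ it outputs $\alpha$ within $\Delta$ with error probability at most $1/3$, outputs $0$ with certainty on $1$-eigenvectors, and uses $O(1/\Delta)$ calls to $\text{c-}U$ and its inverse). $\mathbf{Rotate}(U,\Delta,\varepsilon)$ on input $|\psi\rangle$: (1) apply $\Theta(\log(1/\varepsilon))$ times $\mathbf{Estimate}$ for $U$ with precision $\Delta$ to the same state $|\psi\rangle$ (fresh registers each time); (2) if the majority of estimated phases are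 negative, multiply the state by $-1$ (phase flip), otherwise do nothing; (3) undo the phase estimations of step (1). *)

theory Defs
  imports Complex_Main "Jordan_Normal_Form.Char_Poly"
begin

definition cmat :: "real mat \<Rightarrow> complex mat" where
  "cmat A = map_mat complex_of_real A"

definition cvec :: "real vec \<Rightarrow> complex vec" where
  "cvec v = map_vec complex_of_real v"

definition vnorm2 :: "complex vec \<Rightarrow> real" where
  "vnorm2 v = (\<Sum>i<dim_vec v. (cmod (v $ i))\<^sup>2)"

definition unit_cvec :: "nat \<Rightarrow> complex vec \<Rightarrow> bool" where
  "unit_cvec n v \<longleftrightarrow> v \<in> carrier_vec n \<and> vnorm2 v = 1"

definition reflection :: "nat \<Rightarrow> real vec \<Rightarrow> real mat" where
  "reflection n \<mu> = mat n n (\<lambda>(i,j). (if i = j then 1 else 0) - 2 * (\<mu> $ i) * (\<mu> $ j))"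

definition madj :: "complex mat \<Rightarrow> complex mat" where
  "madj A = mat (dim_col A) (dim_row A) (\<lambda>(i, j). cnj (A $$ (j, i)))"

text \<open>Tail probability Pr[QH > y], where QH takes value 1/alpha_j with probability
  2 delta_j^2 (j = 1..J), 1/pi with probability delta_{-1}^2 and 0 otherwise.\<close>
definition QH_tail :: "nat \<Rightarrow> (nat \<Rightarrow> real) \<Rightarrow> (nat \<Rightarrow> real) \<Rightarrow> real \<Rightarrow> real \<Rightarrow> real" where
  "QH_tail J \<delta> \<alpha> \<delta>m1 y =
     (\<Sum>j\<in>{j. 1 \<le> j \<and> j \<le> J \<and> 1 / \<alpha> j > y}. 2 * (\<delta> j)\<^sup>2)
     + (if 1 / pi > y then \<delta>m1\<^sup>2 else 0)
     + (if 0 > y then 1 - (\<Sum>j\<in>{1..J}. 2 * (\<delta> j)\<^sup>2) - \<delta>m1\<^sup>2 else 0)"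

definition QHT :: "real \<Rightarrow> nat \<Rightarrow> (nat \<Rightarrow> real) \<Rightarrow> (nat \<Rightarrow> real) \<Rightarrow> real \<Rightarrow> real" where
  "QHT \<epsilon> J \<delta> \<alpha> \<delta>m1 = (LEAST y. QH_tail J \<delta> \<alpha> \<delta>m1 y \<le> \<epsilon>)"

text \<open>A (pure) state is a function on (system index, list of ancilla values);
  only indices a < n and lists in anc_dom k M are meaningful.\<close>
type_synonym qstate = "nat \<times> nat list \<Rightarrow> complex"

definition anc_dom :: "nat \<Rightarrow> nat \<Rightarrow> nat list set" where
  "anc_dom k M = {xs. length xs = k \<and> set xs \<subseteq> {..<M}}"

definition qdist :: "nat \<Rightarrow> nat \<Rightarrow> nat \<Rightarrow> qstate \<Rightarrow> qstate \<Rightarrow> real" where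
  "qdist n k M f g = sqrt (\<Sum>a<n. \<Sum>xs\<in>anc_dom k M. (cmod (f (a, xs) - g (a, xs)))\<^sup>2)"

definition embed :: "nat \<Rightarrow> nat \<Rightarrow> complex vec \<Rightarrow> qstate" where
  "embed n k \<psi> = (\<lambda>(a, xs). if a < n \<and> xs = replicate k 0 then \<psi> $ a else 0)"

text \<open>Fourier transform (sign s = 1) or inverse Fourier transform (s = -1) on ancilla register r.\<close>
definition dft_reg :: "real \<Rightarrow> nat \<Rightarrow> nat \<Rightarrow> qstate \<Rightarrow> qstate" where
  "dft_reg s M r f = (\<lambda>(a, xs). (1 / complex_of_real (sqrt (real M))) *
      (\<Sum>y<M. cis (s * 2 * pi * real (xs ! r) * real y / real M) * f (a, xs[r := y])))"

definition cpow_reg :: "nat \<Rightarrow> complex mat \<Rightarrow> nat \<Rightarrow> qstate \<Rightarrow> qstate" where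
  "cpow_reg n V r f = (\<lambda>(a, xs). \<Sum>b<n. ((V ^\<^sub>m (xs ! r)) $$ (a, b)) * f (b, xs))"

text \<open>Standard phase estimation for U on ancilla register r (Fourier transform, controlled powers
  of U, inverse Fourier transform), and its inverse (which uses controlled powers of U^{-1} = U^*).\<close>
definition pe_reg :: "nat \<Rightarrow> complex mat \<Rightarrow> nat \<Rightarrow> nat \<Rightarrow> qstate \<Rightarrow> qstate" where
  "pe_reg n U M r = dft_reg (-1) M r \<circ> cpow_reg n U r \<circ> dft_reg 1 M r"

definition pe_inv_reg :: "nat \<Rightarrow> complex mat \<Rightarrow> nat \<Rightarrow> nat \<Rightarrow> qstate \<Rightarrow> qstate" where
  "pe_inv_reg n U M r = dft_reg (-1) M r \<circ> cpow_reg n (madj U) r \<circ> dft_reg 1 M r"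

fun pe_all :: "nat \<Rightarrow> complex mat \<Rightarrow> nat \<Rightarrow> nat \<Rightarrow> qstate \<Rightarrow> qstate" where
  "pe_all n U M 0 = id"
| "pe_all n U M (Suc k) = pe_reg n U M k \<circ> pe_all n U M k"

fun pe_inv_all :: "nat \<Rightarrow> complex mat \<Rightarrow> nat \<Rightarrow> nat \<Rightarrow> qstate \<Rightarrow> qstate" where
  "pe_inv_all n U M 0 = id"
| "pe_inv_all n U M (Suc k) = pe_inv_all n U M k \<circ> pe_inv_reg n U M k"

definition est_phase :: "nat \<Rightarrow> nat \<Rightarrow> real" where
  "est_phase M x = (if 2 * x \<le> M then 2 * pi * real x / real M else 2 * pi * real x / real M - 2 * pi)"

definition majority_flip :: "nat \<Rightarrow> nat \<Rightarrow> qstate \<Rightarrow> qstate" where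
  "majority_flip M k f = (\<lambda>(a, xs).
     if 2 * card {r. r < k \<and> est_phase M (xs ! r) < 0} > k then - f (a, xs) else f (a, xs))"

text \<open>Size M = 2^t of the phase-estimation register for precision Delta = 1/T: the smallest
  power of two with 2 pi / M \<le> Delta.\<close>
definition pe_size :: "real \<Rightarrow> nat" where
  "pe_size T = (LEAST M. (\<exists>t. M = 2 ^ t) \<and> 2 * pi * T \<le> real M)"

definition Rotate :: "nat \<Rightarrow> complex mat \<Rightarrow> real \<Rightarrow> nat \<Rightarrow> qstate \<Rightarrow> qstate" where
  "Rotate n U T k = pe_inv_all n U (pe_size T) k \<circ> majority_flip (pe_size T) k \<circ> pe_all n U (pe_size T) k"

text \<open>Number of c-U (or c-U^{-1}) applications: each phase estimation with an M = 2^t register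
  implements controlled powers with 1 + 2 + ... + 2^(t-1) = M - 1 applications; Rotate runs k
  estimations and k inverse estimations.\<close>
definition Rotate_queries :: "real \<Rightarrow> nat \<Rightarrow> nat" where
  "Rotate_queries T k = 2 * k * (pe_size T - 1)"

end

theory Submission
  imports Defs
begin

text \<open>Expand the state in an orthonormal family of eigenvectors of the walk \<open>U = U2 U1\<close>, with
  eigenphases \<open>0\<close> and \<open>\<plusminus>\<alpha>\<^sub>j\<close>; the eigenvalue \<open>-1\<close> does not occur because all eigenphases lie in
  \<open>[-pi/2, pi/2]\<close>. On a single eigenvector, \<open>Rotate\<close> only acts on the ancillas: \<open>k\<close> independent
  phase estimations, a majority vote on the sign of the estimated phase, and the inverse estimations.
  The component is thus multiplied by the correct sign, except with the probability of a wrong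
  majority. When the eigenphase is at least the precision \<open>2 pi / M \<le> 1 / T\<close>, one estimation gets
  the sign right with probability at least \<open>11/20\<close> (a Fejer kernel bound), so a Chernoff bound
  makes a wrong majority have probability at most \<open>(199/200)^k \<le> \<epsilon>\<close>. The components with smaller
  phase carry total weight \<open>Pr[QH > T] \<le> \<epsilon>\<close>. Summing over the orthogonal components bounds the
  squared error by \<open>8 \<epsilon>\<close>; the query count is \<open>2 k (M - 1)\<close> with \<open>M < 4 pi T\<close>.\<close>

lemma cos_coeff_sum_8: "(\<Sum>m<8. cos_coeff m * x ^ m) = 1 - x^2/2 + x^4/24 - x^6/720"
proof -
  have "(\<Sum>m<8. f m) = f 0 + f 1 + f 2 + f 3 + f 4 + f 5 + f 6 + (f 7::real)" for f :: "nat \<Rightarrow> real"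
    by (simp add: eval_nat_numeral)
  thus ?thesis by (simp add: cos_coeff_def fact_numeral)
qed

lemma pi_lt_3_2: "pi < 3.2"
proof -
  obtain t where "cos (8/5::real) = (\<Sum>m<8. cos_coeff m * (8/5) ^ m) + (cos(t + 1/2 * real 8 * pi) / fact 8) * (8/5) ^ 8"
    using Maclaurin_cos_expansion[of "8/5::real" 8] by auto
  moreover have "cos(t + 1/2 * real 8 * pi) \<le> 1" by simp
  ultimately have "cos (8/5::real) \<le> (\<Sum>m<8. cos_coeff m * (8/5) ^ m) + (8/5)^8 / fact 8"
    by (simp add: divide_right_mono)
  also have "\<dots> < 0" unfolding cos_coeff_sum_8 by (simp add: fact_numeral eval_nat_numeral)
  finally have "cos (8/5::real) < 0" .
  moreover have "0 < cos (8/5::real)" if "8/5 < pi/2" using that by (intro cos_gt_zero) auto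
  moreover have "cos (8/5::real) = 0" if "8/5 = pi/2" by (metis that cos_pi_half)
  ultimately show ?thesis by fastforce
qed

lemma sin_ge_cubic: assumes "0 \<le> x" shows "x - x^3/6 \<le> sin (x::real)"
proof -
  have "\<bar>sin x - (\<Sum>m<3. sin_coeff m * x ^ m)\<bar> \<le> inverse (fact 3) * \<bar>x\<bar> ^ 3"
    by (rule Maclaurin_sin_bound)
  moreover have "(\<Sum>m<3. sin_coeff m * x ^ m) = x"
    by (simp add: eval_nat_numeral sin_coeff_def del: sum.lessThan_Suc)
      (simp add: sin_coeff_def)
  ultimately show ?thesis using assms by (simp add: fact_numeral abs_if split: if_splits)
qed

text \<open>On an interval \<open>a \<le> g \<le> b\<close> the left-hand side is increasing in the lower bound \<open>r\<close> for
  \<open>sin x / x\<close> and in \<open>g/(1-g)\<close>, so one numerical evaluation at the endpoints settles the interval.\<close>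
lemma sinc_pair_interval_bound:
  fixes a b g r :: real
  assumes "a \<le> g" "g \<le> b" "0 \<le> a" "b < 1" "0 \<le> 1 - 128/75*b^2" "r \<ge> 1 - 128/75 * g^2"
    and "(1-128/75*b^2)^2 * (1 + (a/(1-a))^2) \<ge> 11/20"
  shows "r^2 * (1 + (g/(1-g))^2) \<ge> 11/20"
proof -
  have "g^2 \<le> b^2" using assms by (intro power_mono) auto
  hence "1-128/75*b^2 \<le> r" using assms by linarith
  hence r: "(1-128/75*b^2)^2 \<le> r^2" using assms by (intro power_mono) auto
  have "a/(1-a) \<le> g/(1-g)" using assms by (intro frac_le) auto
  hence "(a/(1-a))^2 \<le> (g/(1-g))^2" using assms by (intro power_mono) auto
  hence "(1-128/75*b^2)^2 * (1 + (a/(1-a))^2) \<le> r^2 * (1 + (g/(1-g))^2)"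
    using r by (intro mult_mono) auto
  thus ?thesis using assms(7) by linarith
qed

lemma sinc_sq_pair_ge_half:
  assumes g: "0 < g" "g \<le> 1/2"
  shows "(sin(pi*g)/(pi*g))^2 + (sin(pi*g)/(pi*(1-g)))^2 \<ge> 11/20"
proof -
  define x where "x = pi * g"
  define r where "r = sin x / x"
  have x0: "0 < x" using g by (simp add: x_def)
  have "x - x^3/6 \<le> sin x" using sin_ge_cubic x0 by auto
  hence "1 - x^2/6 \<le> r" using x0 by (simp add: r_def field_simps power3_eq_cube power2_eq_square)
  moreover have "x^2 \<le> (3.2 * g)^2" unfolding x_def using pi_lt_3_2 g by (intro power_mono) auto
  ultimately have rge: "r \<ge> 1 - 128/75 * g^2" by (simp add: power2_eq_square)
  have e1: "sin(pi*g)/(pi*(1-g)) = r*(g/(1-g))" using g x0 by (simp add: r_def x_def field_simps)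
  have e2: "sin(pi*g)/(pi*g) = r" by (simp add: r_def x_def)
  have "r^2 * (1 + (g/(1-g))^2) \<ge> 11/20"
  proof -
    consider "g \<le> 3/10" | "3/10 \<le> g \<and> g \<le> 35/100" | "35/100 \<le> g \<and> g \<le> 4/10"
      | "4/10 \<le> g \<and> g \<le> 45/100" | "45/100 \<le> g \<and> g \<le> 475/1000" | "475/1000 \<le> g \<and> g \<le> 1/2"
      using g by linarith
    thus ?thesis
    proof cases
      case 1 show ?thesis by (rule sinc_pair_interval_bound[of 0 g "3/10" r]) (use 1 rge g in \<open>auto simp: power2_eq_square\<close>)
    next
      case 2 show ?thesis by (rule sinc_pair_interval_bound[of "3/10" g "35/100" r]) (use 2 rge g in \<open>auto simp: power2_eq_square\<close>)
    next
      case 3 show ?thesis by (rule sinc_pair_interval_bound[of "35/100" g "4/10" r]) (use 3 rge g in \<open>auto simp: power2_eq_square\<close>)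
    next
      case 4 show ?thesis by (rule sinc_pair_interval_bound[of "4/10" g "45/100" r]) (use 4 rge g in \<open>auto simp: power2_eq_square\<close>)
    next
      case 5 show ?thesis by (rule sinc_pair_interval_bound[of "45/100" g "475/1000" r]) (use 5 rge g in \<open>auto simp: power2_eq_square\<close>)
    next
      case 6 show ?thesis by (rule sinc_pair_interval_bound[of "475/1000" g "1/2" r]) (use 6 rge g in \<open>auto simp: power2_eq_square\<close>)
    qed
  qed
  thus ?thesis unfolding e1 e2 by (simp add: power_mult_distrib power_divide algebra_simps)
qed

lemma sinc_sq_pair_ge:
  assumes "0 < f" "f < 1"
  shows "(sin(pi*f)/(pi*f))^2 + (sin(pi*(1-f))/(pi*(1-f)))^2 \<ge> 11/20"
proof (cases "f \<le> 1/2")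
  case True
  have "sin(pi*(1-f)) = sin(pi*f)" by (simp add: right_diff_distrib sin_diff)
  thus ?thesis using sinc_sq_pair_ge_half[of f] True assms by simp
next
  case False
  have "sin(pi*f) = sin(pi*(1-f))" by (simp add: right_diff_distrib sin_diff)
  thus ?thesis using sinc_sq_pair_ge_half[of "1-f"] False assms by (simp add: add.commute)
qed

section \<open>The discrete Fourier transform on one register\<close>

definition dft_kernel :: "real \<Rightarrow> nat \<Rightarrow> nat \<Rightarrow> nat \<Rightarrow> complex" where
  "dft_kernel s M x y = cis (s * 2 * pi * real x * real y / real M)"

lemma dft_kernel_sym: "dft_kernel s M x y = dft_kernel s M y x"
  unfolding dft_kernel_def by (simp add: mult_ac)

lemma cis_ne_1:
  assumes "t \<noteq> 0" "- (2*pi) < t" "t < 2*pi"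
  shows "cis t \<noteq> 1"
proof
  assume "cis t = 1"
  hence "cos t = 1" by (metis cis.sel(1) one_complex.sel(1))
  then obtain n :: int where n: "t = n * 2 * pi" using cos_one_2pi_int by auto
  have "n \<noteq> 0" using assms n by auto
  have "(-1) * (2*pi) < real_of_int n * (2*pi)" using assms n by (simp add: mult_ac)
  hence "-1 < real_of_int n" using mult_less_cancel_right_pos[of "2*pi" "-1" "real_of_int n"] by simp
  moreover have "real_of_int n * (2*pi) < 1 * (2*pi)" using assms n by (simp add: mult_ac)
  hence "real_of_int n < 1" using mult_less_cancel_right_pos[of "2*pi" "real_of_int n" 1] by simp
  ultimately have "-1 < n" "n < 1" by linarith+
  with \<open>n \<noteq> 0\<close> show False by auto
qed

lemma sum_roots_of_unity:
  assumes M: "0 < M" and yz: "y < M" "z < M"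
  shows "(\<Sum>x<M. cis (2 * pi * real x * (real y - real z) / real M)) = (if y = z then of_nat M else 0)"
proof (cases "y = z")
  case True thus ?thesis by simp
next
  case False
  define w where "w = cis (2 * pi * (real y - real z) / real M)"
  have pw: "cis (2 * pi * real x * (real y - real z) / real M) = w ^ x" for x
    unfolding w_def DeMoivre by (simp add: mult_ac)
  have q1: "-1 < (real y - real z) / real M" "(real y - real z) / real M < 1"
    "(real y - real z) / real M \<noteq> 0"
    using False M yz by (auto simp: field_simps)
  have "2 * pi * (real y - real z) / real M = (2*pi) * ((real y - real z) / real M)" by simp
  moreover have "(2*pi) * ((real y - real z) / real M) < (2*pi) * 1"
    using q1 by (intro mult_strict_left_mono) auto
  moreover have "(2*pi) * (-1) < (2*pi) * ((real y - real z) / real M)"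
    using q1 by (intro mult_strict_left_mono) auto
  ultimately have "w \<noteq> 1" unfolding w_def
    using q1 by (intro cis_ne_1) auto
  moreover have "w ^ M = 1" unfolding w_def DeMoivre
  proof -
    have "real M * (2 * pi * (real y - real z) / real M) = 2 * pi * of_int (int y - int z)"
      using M by simp
    thus "cis (real M * (2 * pi * (real y - real z) / real M)) = 1"
      by (metis Ints_of_int cis_multiple_2pi)
  qed
  ultimately have "(\<Sum>x<M. w ^ x) = 0" by (simp add: geometric_sum)
  thus ?thesis using False by (simp add: pw)
qed

lemma dft_kernel_orthogonal:
  assumes M: "0 < M" and yz: "y < M" "z < M" and s: "s = 1 \<or> s = -1"
  shows "(\<Sum>x<M. dft_kernel s M x y * cnj (dft_kernel s M x z)) = (if y = z then of_nat M else 0)"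
proof -
  have e: "dft_kernel s M x y * cnj (dft_kernel s M x z) = (if s = 1 then cis (2 * pi * real x * (real y - real z) / real M)
     else cis (2 * pi * real x * (real z - real y) / real M))" for x
    using s unfolding dft_kernel_def by (auto simp: cis_cnj cis_mult diff_divide_distrib[symmetric] algebra_simps)
  have S: "(\<Sum>x<M. dft_kernel s M x y * cnj (dft_kernel s M x z)) = (\<Sum>x<M. if s = 1 then cis (2 * pi * real x * (real y - real z) / real M)
     else cis (2 * pi * real x * (real z - real y) / real M))" by (simp only: e)
  show ?thesis using s
  proof
    assume s1: "s = 1" show ?thesis unfolding S using s1 sum_roots_of_unity[OF M yz] by simp
  next
    assume s1: "s = -1" show ?thesis unfolding S using s1 sum_roots_of_unity[OF M yz(2,1)] by auto
  qed
qed

lemma sum_swap3: "(\<Sum>x\<in>A. \<Sum>y\<in>B. \<Sum>z\<in>C. F x y z) = (\<Sum>y\<in>B. \<Sum>z\<in>C. \<Sum>x\<in>A. F x y z)"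
proof -
  have "(\<Sum>x\<in>A. \<Sum>y\<in>B. \<Sum>z\<in>C. F x y z) = (\<Sum>y\<in>B. \<Sum>x\<in>A. \<Sum>z\<in>C. F x y z)" by (rule sum.swap)
  also have "\<dots> = (\<Sum>y\<in>B. \<Sum>z\<in>C. \<Sum>x\<in>A. F x y z)" by (rule sum.cong[OF refl], rule sum.swap)
  finally show ?thesis .
qed

lemma dft_parseval:
  assumes M: "0 < M" and s: "s = 1 \<or> s = -1"
  shows "(\<Sum>x<M. (cmod (\<Sum>y<M. dft_kernel s M x y * g y))^2) = real M * (\<Sum>y<M. (cmod (g y))^2)"
proof -
  have "complex_of_real (\<Sum>x<M. (cmod (\<Sum>y<M. dft_kernel s M x y * g y))^2)
      = (\<Sum>x<M. (\<Sum>y<M. dft_kernel s M x y * g y) * cnj (\<Sum>z<M. dft_kernel s M x z * g z))"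
    by (simp only: of_real_sum complex_norm_square)
  also have "\<dots> = (\<Sum>x<M. \<Sum>y<M. \<Sum>z<M. g y * cnj (g z) * (dft_kernel s M x y * cnj (dft_kernel s M x z)))"
    by (simp only: cnj_sum sum_product complex_cnj_mult) (simp add: mult_ac)
  also have "\<dots> = (\<Sum>y<M. \<Sum>z<M. \<Sum>x<M. g y * cnj (g z) * (dft_kernel s M x y * cnj (dft_kernel s M x z)))"
    by (rule sum_swap3)
  also have "\<dots> = (\<Sum>y<M. \<Sum>z<M. g y * cnj (g z) * (\<Sum>x<M. dft_kernel s M x y * cnj (dft_kernel s M x z)))"
    by (simp add: sum_distrib_left)
  also have "\<dots> = (\<Sum>y<M. \<Sum>z<M. g y * cnj (g z) * (if y = z then of_nat M else 0))"
    by (intro sum.cong refl) (simp add: dft_kernel_orthogonal[OF M _ _ s])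
  also have "\<dots> = (\<Sum>y<M. of_nat M * (g y * cnj (g y)))"
    by (simp add: mult_ac if_distrib sum.delta cong: if_cong)
  also have "\<dots> = complex_of_real (real M * (\<Sum>y<M. (cmod (g y))^2))"
    by (simp only: of_real_mult of_real_sum complex_norm_square sum_distrib_left) simp
  finally show ?thesis using of_real_eq_iff by blast
qed

section \<open>Phase estimation on an eigenvector\<close>

text \<open>On an eigenvector of eigenvalue \<open>l\<close>, each step of the circuits only changes the ancilla amplitudes
  \<open>nat list \<Rightarrow> complex\<close>; the controlled powers become multiplication by \<open>l ^ x\<close>.\<close>

definition anc_dft :: "real \<Rightarrow> nat \<Rightarrow> nat \<Rightarrow> (nat list \<Rightarrow> complex) \<Rightarrow> nat list \<Rightarrow> complex" where
  "anc_dft s M r g xs = (1 / complex_of_real (sqrt (real M))) * (\<Sum>y<M. dft_kernel s M (xs!r) y * g (xs[r := y]))"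

definition anc_phase :: "complex \<Rightarrow> nat \<Rightarrow> (nat list \<Rightarrow> complex) \<Rightarrow> nat list \<Rightarrow> complex" where
  "anc_phase l r g xs = l ^ (xs!r) * g xs"

definition anc_pe :: "complex \<Rightarrow> nat \<Rightarrow> nat \<Rightarrow> (nat list \<Rightarrow> complex) \<Rightarrow> nat list \<Rightarrow> complex" where
  "anc_pe l M r = anc_dft (-1) M r \<circ> anc_phase l r \<circ> anc_dft 1 M r"

fun anc_pe_all :: "complex \<Rightarrow> nat \<Rightarrow> nat \<Rightarrow> (nat list \<Rightarrow> complex) \<Rightarrow> nat list \<Rightarrow> complex" where
  "anc_pe_all l M 0 = id"
| "anc_pe_all l M (Suc k) = anc_pe l M k \<circ> anc_pe_all l M k"

fun anc_pe_inv_all :: "complex \<Rightarrow> nat \<Rightarrow> nat \<Rightarrow> (nat list \<Rightarrow> complex) \<Rightarrow> nat list \<Rightarrow> complex" where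
  "anc_pe_inv_all l M 0 = id"
| "anc_pe_inv_all l M (Suc k) = anc_pe_inv_all l M k \<circ> anc_pe (cnj l) M k"

definition anc_flip :: "nat \<Rightarrow> nat \<Rightarrow> (nat list \<Rightarrow> complex) \<Rightarrow> nat list \<Rightarrow> complex" where
  "anc_flip M k g xs = (if 2 * card {r. r < k \<and> est_phase M (xs ! r) < 0} > k then - g xs else g xs)"

definition anc_norm2 :: "nat \<Rightarrow> nat \<Rightarrow> (nat list \<Rightarrow> complex) \<Rightarrow> real" where
  "anc_norm2 k M f = (\<Sum>xs\<in>anc_dom k M. (cmod (f xs))^2)"

lemma anc_dom_upd: "xs \<in> anc_dom k M \<Longrightarrow> y < M \<Longrightarrow> xs[r := y] \<in> anc_dom k M"
  unfolding anc_dom_def by (auto dest: set_update_subset_insert[THEN subsetD])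

lemma anc_dom_nth: "xs \<in> anc_dom k M \<Longrightarrow> r < k \<Longrightarrow> xs ! r < M"
  unfolding anc_dom_def using nth_mem by fastforce

lemma anc_dom_len: "xs \<in> anc_dom k M \<Longrightarrow> length xs = k"
  unfolding anc_dom_def by auto

lemma dft_kernel_cnj: "cnj (dft_kernel s M x y) = dft_kernel (-s) M x y"
  unfolding dft_kernel_def by (simp add: cis_cnj)

definition update_closed :: "nat list set \<Rightarrow> nat \<Rightarrow> nat \<Rightarrow> bool" where
  "update_closed X M r = (\<forall>xs\<in>X. \<forall>y<M. xs[r := y] \<in> X)"

lemma anc_dft_cong: "update_closed X M r \<Longrightarrow> (\<forall>xs\<in>X. f xs = g xs) \<Longrightarrow> \<forall>xs\<in>X. anc_dft s M r f xs = anc_dft s M r g xs"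
  unfolding anc_dft_def update_closed_def by auto

lemma anc_phase_cong: "(\<forall>xs\<in>X. f xs = g xs) \<Longrightarrow> \<forall>xs\<in>X. anc_phase l r f xs = anc_phase l r g xs"
  unfolding anc_phase_def by auto

lemma anc_pe_cong: "update_closed X M r \<Longrightarrow> (\<forall>xs\<in>X. f xs = g xs) \<Longrightarrow> \<forall>xs\<in>X. anc_pe l M r f xs = anc_pe l M r g xs"
  unfolding anc_pe_def comp_def by (intro anc_dft_cong anc_phase_cong) auto

lemma update_closed_anc_dom: "update_closed (anc_dom k M) M r"
  unfolding update_closed_def using anc_dom_upd by auto

lemma anc_pe_inv_all_cong: "(\<forall>xs\<in>anc_dom k M. f xs = g xs) \<Longrightarrow> \<forall>xs\<in>anc_dom k M. anc_pe_inv_all l M j f xs = anc_pe_inv_all l M j g xs"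
proof (induction j arbitrary: f g)
  case 0 thus ?case by simp
next
  case (Suc j)
  have "\<forall>xs\<in>anc_dom k M. anc_pe (cnj l) M j f xs = anc_pe (cnj l) M j g xs"
    by (rule anc_pe_cong[OF update_closed_anc_dom Suc.prems])
  from Suc.IH[OF this] show ?case by simp
qed

lemma anc_dft_inverse:
  assumes M: "0 < M" and s: "s = 1 \<or> s = -1" and xs: "xs \<in> anc_dom k M" and r: "r < k"
  shows "anc_dft (-s) M r (anc_dft s M r g) xs = g xs"
proof -
  have len: "length xs = k" using xs anc_dom_len by auto
  have xr: "xs ! r < M" using xs r anc_dom_nth by auto
  have c: "(1 / complex_of_real (sqrt (real M))) * (1 / complex_of_real (sqrt (real M))) = 1 / of_nat M"
    using M by (simp add: of_real_mult[symmetric] del: of_real_mult)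
  have "anc_dft (-s) M r (anc_dft s M r g) xs = (1 / complex_of_real (sqrt (real M))) * (\<Sum>y<M. dft_kernel (-s) M (xs!r) y *
      ((1 / complex_of_real (sqrt (real M))) * (\<Sum>z<M. dft_kernel s M y z * g (xs[r := z]))))"
    unfolding anc_dft_def using len r by simp
  also have "\<dots> = (1 / of_nat M) * (\<Sum>y<M. \<Sum>z<M. g (xs[r := z]) * (dft_kernel s M y z * cnj (dft_kernel s M y (xs!r))))"
    unfolding c[symmetric] dft_kernel_cnj[symmetric]
    by (simp add: sum_distrib_left dft_kernel_sym[of s M _ "xs!r"] mult_ac)
  also have "\<dots> = (1 / of_nat M) * (\<Sum>z<M. \<Sum>y<M. g (xs[r := z]) * (dft_kernel s M y z * cnj (dft_kernel s M y (xs!r))))"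
    by (subst sum.swap) (rule refl)
  also have "\<dots> = (1 / of_nat M) * (\<Sum>z<M. g (xs[r := z]) * (\<Sum>y<M. dft_kernel s M y z * cnj (dft_kernel s M y (xs!r))))"
    by (simp add: sum_distrib_left)
  also have "\<dots> = (1 / of_nat M) * (\<Sum>z<M. g (xs[r := z]) * (if z = xs!r then of_nat M else 0))"
    by (intro arg_cong[where f = "\<lambda>t. _ * t"] sum.cong refl) (simp add: dft_kernel_orthogonal[OF M _ xr s])
  also have "\<dots> = g xs" using M xr by (simp add: if_distrib sum.delta cong: if_cong)
  finally show ?thesis .
qed

definition anc_linear :: "((nat list \<Rightarrow> complex) \<Rightarrow> nat list \<Rightarrow> complex) \<Rightarrow> bool" where
  "anc_linear L = (\<forall>a b f g. L (\<lambda>xs. a * f xs + b * g xs) = (\<lambda>xs. a * L f xs + b * L g xs))"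

lemma anc_linear_dft: "anc_linear (anc_dft s M r)"
  unfolding anc_linear_def anc_dft_def by (auto simp: sum.distrib sum_distrib_left algebra_simps)

lemma anc_linear_phase: "anc_linear (anc_phase l r)"
  unfolding anc_linear_def anc_phase_def by (auto simp: algebra_simps)

lemma anc_linear_flip: "anc_linear (anc_flip M k)"
  unfolding anc_linear_def anc_flip_def by (auto simp: algebra_simps)

lemma anc_linear_comp: "anc_linear L1 \<Longrightarrow> anc_linear L2 \<Longrightarrow> anc_linear (L1 \<circ> L2)"
  unfolding anc_linear_def comp_def by simp

lemma anc_linear_id: "anc_linear id"
  unfolding anc_linear_def by simp

lemma anc_linear_pe: "anc_linear (anc_pe l M r)"
  unfolding anc_pe_def by (intro anc_linear_comp anc_linear_dft anc_linear_phase)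

lemma anc_linear_pe_all: "anc_linear (anc_pe_all l M j)"
  by (induction j) (simp_all only: anc_pe_all.simps anc_linear_comp anc_linear_pe anc_linear_id)

lemma anc_linear_pe_inv_all: "anc_linear (anc_pe_inv_all l M j)"
  by (induction j) (simp_all only: anc_pe_inv_all.simps anc_linear_comp anc_linear_pe anc_linear_id)

lemma anc_linearD: "anc_linear L \<Longrightarrow> L (\<lambda>xs. a * f xs + b * g xs) xs = a * L f xs + b * L g xs"
  unfolding anc_linear_def by metis

lemma anc_linear_scale: "anc_linear L \<Longrightarrow> L (\<lambda>xs. a * f xs) xs = a * L f xs"
  using anc_linearD[of L a f 0 f xs] by simp

lemma anc_linear_diff: "anc_linear L \<Longrightarrow> L (\<lambda>xs. f xs - b * g xs) xs = L f xs - b * L g xs"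
  using anc_linearD[of L 1 f "-b" g xs] by simp

lemma sum_anc_dom_fiber:
  assumes M: "0 < M" and r: "r < k"
  shows "(\<Sum>xs\<in>anc_dom k M. F xs) = (\<Sum>xs\<in>{xs\<in>anc_dom k M. xs!r = 0}. \<Sum>y<M. F (xs[r:=y]))"
proof -
  let ?D0 = "{xs\<in>anc_dom k M. xs!r = 0}"
  have upd_zero: "xs[r := 0] = xs" if "xs ! r = 0" for xs :: "nat list" by (metis that list_update_id)
  have "(\<Sum>xs\<in>?D0. \<Sum>y<M. F (xs[r:=y])) = (\<Sum>p\<in>?D0 \<times> {..<M}. F ((fst p)[r := snd p]))"
    by (simp add: sum.cartesian_product case_prod_beta)
  also have "\<dots> = (\<Sum>xs\<in>anc_dom k M. F xs)"
    by (rule sum.reindex_bij_witness[where i = "\<lambda>zs. (zs[r:=0], zs!r)" and j = "\<lambda>p. (fst p)[r := snd p]"])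
      (use r M in \<open>auto simp: anc_dom_upd anc_dom_nth upd_zero dest: anc_dom_len\<close>)
  finally show ?thesis by simp
qed

lemma anc_norm2_dft:
  assumes M: "0 < M" and r: "r < k" and s: "s = 1 \<or> s = -1"
  shows "anc_norm2 k M (anc_dft s M r g) = anc_norm2 k M g"
proof -
  let ?D0 = "{xs\<in>anc_dom k M. xs!r = 0}"
  have inner: "(\<Sum>y<M. (cmod (anc_dft s M r g (xs[r:=y])))^2) = (\<Sum>y<M. (cmod (g (xs[r:=y])))^2)"
    if xs: "xs \<in> ?D0" for xs
  proof -
    have len: "length xs = k" using xs anc_dom_len by auto
    have e: "anc_dft s M r g (xs[r:=y]) = (1 / complex_of_real (sqrt (real M))) * (\<Sum>z<M. dft_kernel s M y z * g (xs[r := z]))" for y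
      unfolding anc_dft_def using len r by simp
    have "(\<Sum>y<M. (cmod (anc_dft s M r g (xs[r:=y])))^2) = (\<Sum>y<M. (cmod (\<Sum>z<M. dft_kernel s M y z * g (xs[r := z])))^2 / real M)"
      unfolding e using M by (simp add: norm_mult norm_divide power_mult_distrib power_divide)
    also have "\<dots> = (\<Sum>y<M. (cmod (\<Sum>z<M. dft_kernel s M y z * g (xs[r := z])))^2) / real M"
      by (simp add: sum_divide_distrib)
    also have "\<dots> = (\<Sum>y<M. (cmod (g (xs[r:=y])))^2)"
      using dft_parseval[OF M s, of "\<lambda>z. g (xs[r := z])"] M by simp
    finally show ?thesis .
  qed
  show ?thesis unfolding anc_norm2_def sum_anc_dom_fiber[OF M r] using inner by simp
qed

lemma anc_norm2_phase:
  assumes "cmod l = 1" shows "anc_norm2 k M (anc_phase l r g) = anc_norm2 k M g"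
  unfolding anc_norm2_def anc_phase_def using assms by (simp add: norm_mult norm_power)

lemma anc_norm2_pe:
  assumes M: "0 < M" and r: "r < k" and l: "cmod l = 1"
  shows "anc_norm2 k M (anc_pe l M r g) = anc_norm2 k M g"
  unfolding anc_pe_def comp_def
  by (simp add: anc_norm2_dft[OF M r] anc_norm2_phase[OF l])

lemma anc_norm2_pe_inv_all:
  assumes M: "0 < M" and j: "j \<le> k" and l: "cmod l = 1"
  shows "anc_norm2 k M (anc_pe_inv_all l M j g) = anc_norm2 k M g"
  using j
proof (induction j arbitrary: g)
  case 0 thus ?case by simp
next
  case (Suc j)
  have "cmod (cnj l) = 1" using l by simp
  thus ?case using Suc by (simp add: anc_norm2_pe[OF M])
qed

lemma anc_norm2_cong: "(\<forall>xs\<in>anc_dom k M. f xs = g xs) \<Longrightarrow> anc_norm2 k M f = anc_norm2 k M g"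
  unfolding anc_norm2_def by simp

lemma anc_pe_inverse:
  assumes M: "0 < M" and xs: "xs \<in> anc_dom k M" and r: "r < k" and l: "cmod l = 1"
  shows "anc_pe (cnj l) M r (anc_pe l M r g) xs = g xs"
proof -
  have a1: "\<forall>xs\<in>anc_dom k M. anc_dft 1 M r (anc_dft (-1) M r h) xs = h xs" for h
    using anc_dft_inverse[OF M, of "-1"] r by auto
  have m: "anc_phase (cnj l) r (anc_phase l r h) = h" for h
  proof -
    have "cnj l ^ n * l ^ n = 1" for n
      by (metis l complex_norm_square mult.commute norm_one of_real_1 one_power2 power_mult_distrib power_one)
    thus ?thesis unfolding anc_phase_def by (simp add: mult.assoc[symmetric])
  qed
  have "\<forall>xs\<in>anc_dom k M. anc_phase (cnj l) r (anc_dft 1 M r (anc_dft (-1) M r (anc_phase l r (anc_dft 1 M r g)))) xs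
     = anc_phase (cnj l) r (anc_phase l r (anc_dft 1 M r g)) xs"
    by (rule anc_phase_cong, rule a1)
  hence "\<forall>xs\<in>anc_dom k M. anc_dft (-1) M r (anc_phase (cnj l) r (anc_dft 1 M r (anc_dft (-1) M r (anc_phase l r (anc_dft 1 M r g))))) xs
     = anc_dft (-1) M r (anc_phase (cnj l) r (anc_phase l r (anc_dft 1 M r g))) xs"
    by (intro anc_dft_cong update_closed_anc_dom)
  moreover have "anc_dft (-1) M r (anc_phase (cnj l) r (anc_phase l r (anc_dft 1 M r g))) xs = g xs"
    unfolding m using anc_dft_inverse[OF M _ xs r, of 1] by simp
  ultimately show ?thesis using xs unfolding anc_pe_def by simp
qed

lemma anc_pe_inv_all_pe_all:
  assumes M: "0 < M" and j: "j \<le> k" and l: "cmod l = 1"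
  shows "\<forall>xs\<in>anc_dom k M. anc_pe_inv_all l M j (anc_pe_all l M j g) xs = g xs"
  using j
proof (induction j)
  case 0 thus ?case by simp
next
  case (Suc j)
  have "\<forall>xs\<in>anc_dom k M. anc_pe (cnj l) M j (anc_pe l M j (anc_pe_all l M j g)) xs = anc_pe_all l M j g xs"
    using anc_pe_inverse[OF M _ _ l] Suc.prems by auto
  from anc_pe_inv_all_cong[OF this, of l j] Suc show ?case by simp
qed

definition pe_amp :: "nat \<Rightarrow> complex \<Rightarrow> nat \<Rightarrow> complex" where
  "pe_amp M l x = (1 / of_nat M) * (\<Sum>y<M. dft_kernel (-1) M x y * l ^ y)"

definition anc_zero :: "nat \<Rightarrow> nat list \<Rightarrow> complex" where
  "anc_zero k xs = (if xs = replicate k 0 then 1 else 0)"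

text \<open>The ancilla amplitudes after the first \<open>j\<close> of \<open>k\<close> phase estimations applied to \<open>|0...0\<rangle>\<close>.\<close>
definition pe_partial :: "nat \<Rightarrow> complex \<Rightarrow> nat \<Rightarrow> nat \<Rightarrow> nat list \<Rightarrow> complex" where
  "pe_partial M l k j xs = (\<Prod>r<j. pe_amp M l (xs!r)) * (if \<forall>r. j \<le> r \<and> r < k \<longrightarrow> xs!r = 0 then 1 else 0)"

lemma update_closed_length: "update_closed {xs. length xs = k} M r"
  unfolding update_closed_def by auto

lemma dft_kernel_0: "dft_kernel s M x 0 = 1"
  unfolding dft_kernel_def by simp

lemma anc_pe_partial_step:
  assumes M: "0 < M" and j: "j < k" and len: "length xs = k"
  shows "anc_pe l M j (pe_partial M l k j) xs = pe_partial M l k (Suc j) xs"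
proof -
  define c where "c = 1 / complex_of_real (sqrt (real M))"
  define P where "P = (\<lambda>xs. \<Prod>r<j. pe_amp M l (xs!r))"
  define C where "C = (\<lambda>xs. if \<forall>r. j < r \<and> r < k \<longrightarrow> xs!r = (0::nat) then (1::complex) else 0)"
  have PC_upd: "P (zs[j := y]) = P zs" "C (zs[j := y]) = C zs" for zs y
    unfolding P_def C_def by (auto intro!: prod.cong)
  have F_upd: "pe_partial M l k j (zs[j := y]) = P zs * (if y = 0 then C zs else 0)" if "length zs = k" for zs y
  proof -
    have "(\<forall>r. j \<le> r \<and> r < k \<longrightarrow> zs[j := y] ! r = 0) \<longleftrightarrow> (y = 0 \<and> (\<forall>r. j < r \<and> r < k \<longrightarrow> zs!r = 0))"
      using that j by (auto simp: nth_list_update)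
    thus ?thesis unfolding pe_partial_def P_def[symmetric] PC_upd(1)[symmetric]
      by (simp add: C_def P_def)
  qed
  have A1: "anc_dft 1 M j (pe_partial M l k j) zs = c * (P zs * C zs)" if "length zs = k" for zs
  proof -
    have "anc_dft 1 M j (pe_partial M l k j) zs = c * (\<Sum>y<M. dft_kernel 1 M (zs!j) y * (P zs * (if y = 0 then C zs else 0)))"
      unfolding anc_dft_def c_def using F_upd[OF that] by simp
    also have "\<dots> = c * (P zs * C zs)"
      using M by (simp add: if_distrib dft_kernel_0 sum.delta cong: if_cong)
    finally show ?thesis .
  qed
  have cc: "c * c = 1 / of_nat M" unfolding c_def
    using M by (simp add: of_real_mult[symmetric] del: of_real_mult)
  have "anc_pe l M j (pe_partial M l k j) xs = c * (\<Sum>y<M. dft_kernel (-1) M (xs!j) y * (l ^ y * (c * (P xs * C xs))))"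
    unfolding anc_pe_def comp_def anc_dft_def[of "-1"] anc_phase_def c_def[symmetric]
    using len j A1 PC_upd by simp
  also have "\<dots> = pe_amp M l (xs!j) * P xs * C xs"
    unfolding pe_amp_def cc[symmetric] by (simp add: sum_distrib_left sum_distrib_right mult_ac)
  also have "\<dots> = pe_partial M l k (Suc j) xs"
  proof -
    have "(\<forall>r. Suc j \<le> r \<and> r < k \<longrightarrow> xs!r = 0) \<longleftrightarrow> (\<forall>r. j < r \<and> r < k \<longrightarrow> xs!r = 0)" by auto
    thus ?thesis unfolding pe_partial_def P_def C_def by (simp add: mult_ac)
  qed
  finally show ?thesis .
qed

lemma anc_pe_all_zero_partial:
  assumes M: "0 < M" and j: "j \<le> k"
  shows "\<forall>xs\<in>{xs. length xs = k}. anc_pe_all l M j (anc_zero k) xs = pe_partial M l k j xs"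
  using j
proof (induction j)
  case 0
  have "xs = replicate k 0 \<longleftrightarrow> (\<forall>r. r < k \<longrightarrow> xs!r = 0)" if "length xs = k" for xs :: "nat list"
    using that by (auto simp: list_eq_iff_nth_eq)
  thus ?case by (simp add: pe_partial_def anc_zero_def)
next
  case (Suc j)
  hence IH: "\<forall>xs\<in>{xs. length xs = k}. anc_pe_all l M j (anc_zero k) xs = pe_partial M l k j xs" by simp
  have "\<forall>xs\<in>{xs. length xs = k}. anc_pe l M j (anc_pe_all l M j (anc_zero k)) xs = anc_pe l M j (pe_partial M l k j) xs"
    by (rule anc_pe_cong[OF update_closed_length IH])
  thus ?case using anc_pe_partial_step[OF M] Suc.prems by simp
qed

lemma anc_pe_all_zero:
  assumes M: "0 < M" and xs: "xs \<in> anc_dom k M"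
  shows "anc_pe_all l M k (anc_zero k) xs = (\<Prod>r<k. pe_amp M l (xs!r))"
  using anc_pe_all_zero_partial[OF M, of k k l] anc_dom_len[OF xs] by (simp add: pe_partial_def)

section \<open>Majority vote over independent estimations\<close>

lemma anc_dom_Suc: "anc_dom (Suc k) M = (\<lambda>p. fst p # snd p) ` ({..<M} \<times> anc_dom k M)"
proof
  show "anc_dom (Suc k) M \<subseteq> (\<lambda>p. fst p # snd p) ` ({..<M} \<times> anc_dom k M)"
  proof
    fix zs assume "zs \<in> anc_dom (Suc k) M"
    then obtain x xs where "zs = x # xs" "x < M" "xs \<in> anc_dom k M"
      unfolding anc_dom_def by (cases zs) auto
    thus "zs \<in> (\<lambda>p. fst p # snd p) ` ({..<M} \<times> anc_dom k M)" by force
  qed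
  show "(\<lambda>p. fst p # snd p) ` ({..<M} \<times> anc_dom k M) \<subseteq> anc_dom (Suc k) M"
    unfolding anc_dom_def by auto
qed

lemma sum_anc_dom_prod: "(\<Sum>xs\<in>anc_dom k M. \<Prod>r<k. f (xs!r)) = (\<Sum>x<M. f x :: real) ^ k"
proof (induction k)
  case 0
  have "anc_dom 0 M = {[]}" unfolding anc_dom_def by auto
  thus ?case by simp
next
  case (Suc k)
  have inj: "inj_on (\<lambda>p. fst p # snd p) ({..<M} \<times> anc_dom k M)"
    by (auto simp: inj_on_def)
  have "(\<Sum>xs\<in>anc_dom (Suc k) M. \<Prod>r<Suc k. f (xs!r))
      = (\<Sum>p\<in>{..<M} \<times> anc_dom k M. \<Prod>r<Suc k. f ((fst p # snd p)!r))"
    unfolding anc_dom_Suc by (simp add: sum.reindex[OF inj])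
  also have "\<dots> = (\<Sum>p\<in>{..<M} \<times> anc_dom k M. f (fst p) * (\<Prod>r<k. f (snd p ! r)))"
    by (simp del: prod.lessThan_Suc add: prod.lessThan_Suc_shift)
  also have "\<dots> = (\<Sum>x<M. \<Sum>xs\<in>anc_dom k M. f x * (\<Prod>r<k. f (xs ! r)))"
    by (simp add: sum.cartesian_product case_prod_beta)
  also have "\<dots> = (\<Sum>x<M. f x) * (\<Sum>xs\<in>anc_dom k M. \<Prod>r<k. f (xs ! r))"
    by (simp add: sum_product)
  finally show ?case using Suc by simp
qed

lemma prod_if_card: "(\<Prod>r<k. if B r then a else 1) = (a::real) ^ card {r. r < k \<and> B r}" for k :: nat
proof -
  have "(\<Prod>r<k. if B r then a else 1) = (\<Prod>r\<in>{..<k} \<inter> {r. B r}. a) * (\<Prod>r\<in>{..<k} \<inter> - {r. B r}. 1)"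
  proof -
    have "finite {..<k}" by simp
    from prod.If_cases[OF this, of B "\<lambda>_. a" "\<lambda>_. 1"] show ?thesis by simp
  qed
  also have "{..<k} \<inter> {r. B r} = {r. r < k \<and> B r}" by auto
  finally show ?thesis by simp
qed

text \<open>Chernoff bound by the exponential moment method: weighting the outcomes in \<open>B\<close> by \<open>(11/10)^2\<close>,
  a single register has mean weight \<open>\<le> 2189/2000\<close>, while a wrong majority has weight \<open>\<ge> (11/10)^k\<close>.\<close>
lemma majority_wrong_prob_le:
  fixes p :: "nat \<Rightarrow> real"
  assumes p0: "\<And>x. 0 \<le> p x" and p1: "(\<Sum>x<M. p x) = 1"
    and pB: "(\<Sum>x\<in>{x. x < M \<and> B x}. p x) \<le> 9/20"
  shows "(\<Sum>xs\<in>anc_dom k M. if k \<le> 2 * card {r. r < k \<and> B (xs!r)} then \<Prod>r<k. p (xs!r) else 0) \<le> (199/200)^k"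
proof -
  define t where "t = (\<lambda>x. if B x then (121/100::real) else 1)"
  have tprod: "(\<Prod>r<k. t (xs!r)) = (11/10) ^ (2 * card {r. r < k \<and> B (xs!r)})" for xs
    unfolding t_def using prod_if_card[of "\<lambda>r. B (xs!r)" "121/100" k] by (simp add: power_mult power2_eq_square)
  have tm: "(if k \<le> 2 * card {r. r < k \<and> B (xs!r)} then \<Prod>r<k. p (xs!r) else 0)
      \<le> (\<Prod>r<k. p (xs!r) * t (xs!r)) / (11/10)^k" for xs
  proof (cases "k \<le> 2 * card {r. r < k \<and> B (xs!r)}")
    case True
    have P0: "0 \<le> (\<Prod>r<k. p (xs!r))" using p0 by (simp add: prod_nonneg)
    have "(11/10::real)^k \<le> (11/10) ^ (2 * card {r. r < k \<and> B (xs!r)})"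
      using True by (intro power_increasing) auto
    hence "(\<Prod>r<k. p (xs!r)) * (11/10)^k \<le> (\<Prod>r<k. p (xs!r)) * (\<Prod>r<k. t (xs!r))"
      unfolding tprod using P0 by (intro mult_left_mono) auto
    thus ?thesis using True by (simp add: prod.distrib field_simps)
  next
    case False
    have "0 \<le> (\<Prod>r<k. p (xs!r) * t (xs!r))" using p0 by (intro prod_nonneg) (auto simp: t_def)
    thus ?thesis using False by simp
  qed
  have "(\<Sum>xs\<in>anc_dom k M. if k \<le> 2 * card {r. r < k \<and> B (xs!r)} then \<Prod>r<k. p (xs!r) else 0)
     \<le> (\<Sum>xs\<in>anc_dom k M. (\<Prod>r<k. p (xs!r) * t (xs!r)) / (11/10)^k)"
    by (intro sum_mono tm)
  also have "\<dots> = (\<Sum>x<M. p x * t x) ^ k / (11/10)^k"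
    by (simp add: sum_divide_distrib[symmetric] sum_anc_dom_prod[where f = "\<lambda>x. p x * t x"])
  also have "\<dots> \<le> (2189/2000) ^ k / (11/10)^k"
  proof -
    have "(\<Sum>x<M. p x * t x) = (\<Sum>x<M. p x + (if B x then 21/100 * p x else 0))"
      by (intro sum.cong) (auto simp: t_def)
    also have "\<dots> = (\<Sum>x<M. p x) + 21/100 * (\<Sum>x\<in>{x. x < M \<and> B x}. p x)"
      by (simp add: sum.distrib sum.If_cases sum_distrib_left lessThan_def Collect_conj_eq Int_commute)
    also have "\<dots> \<le> 2189/2000" using p1 pB by simp
    finally have le: "(\<Sum>x<M. p x * t x) \<le> 2189/2000" .
    have "0 \<le> (\<Sum>x<M. p x * t x)" using p0 by (intro sum_nonneg) (auto simp: t_def)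
    hence "(\<Sum>x<M. p x * t x) ^ k \<le> (2189/2000) ^ k" using le by (intro power_mono)
    thus ?thesis by (intro divide_right_mono) auto
  qed
  also have "\<dots> = (199/200)^k" by (simp add: power_divide[symmetric])
  finally show ?thesis .
qed

section \<open>Fejer kernel bounds\<close>

lemma div_le_self_real: "0 \<le> a \<Longrightarrow> 1 \<le> m \<Longrightarrow> a / m \<le> (a::real)"
  using divide_left_mono[of 1 m a] by simp

lemma cmod_cis_minus_1: "(cmod (cis v - 1))^2 = 4 * (sin (v/2))^2"
proof -
  have "(cmod (cis v - 1))^2 = (cos v - 1)^2 + (sin v)^2"
    by (simp add: cmod_def)
  also have "\<dots> = 2 - 2 * cos v" by (simp add: power2_diff)
  also have "cos v = 1 - 2 * (sin (v/2))^2" using cos_double_sin[of "v/2"] by simp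
  finally show ?thesis by simp
qed

lemma fejer_ge_sinc_sq:
  assumes M: "0 < M" and s: "s \<noteq> 0" "\<bar>s\<bar> < 1"
  shows "(cmod ((1 / of_nat M) * (\<Sum>y<M. cis (real y * (2 * pi * s / real M)))))^2 \<ge> (sin (pi * s) / (pi * s))^2"
proof -
  define u where "u = 2 * pi * s / real M"
  define w where "w = cis u"
  have Mge: "1 \<le> real M" using M by simp
  have us: "\<bar>u\<bar> < 2 * pi" "u \<noteq> 0"
  proof -
    have "\<bar>u\<bar> = 2 * pi * \<bar>s\<bar> / real M" unfolding u_def by (simp add: abs_mult)
    also have "\<dots> \<le> 2 * pi * \<bar>s\<bar>" using Mge by (intro div_le_self_real) auto
    also have "\<dots> < 2 * pi * 1" using s by (intro mult_strict_left_mono) auto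
    finally show "\<bar>u\<bar> < 2 * pi" by simp
    show "u \<noteq> 0" using s M by (simp add: u_def)
  qed
  have w1: "w \<noteq> 1" unfolding w_def using us by (intro cis_ne_1) auto
  have pw: "cis (real y * u) = w ^ y" for y unfolding w_def DeMoivre by simp
  have "(\<Sum>y<M. cis (real y * (2 * pi * s / real M))) = (w ^ M - 1) / (w - 1)"
    using geometric_sum[OF w1, of M] by (simp add: pw u_def[symmetric])
  hence "(cmod ((1 / of_nat M) * (\<Sum>y<M. cis (real y * (2 * pi * s / real M)))))^2
     = (cmod (w ^ M - 1))^2 / ((real M)^2 * (cmod (w - 1))^2)"
    by (simp add: norm_mult norm_divide power_mult_distrib power_divide)
  also have "w ^ M = cis (2 * pi * s)" unfolding w_def DeMoivre u_def using M by simp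
  also have "(cmod (cis (2 * pi * s) - 1))^2 = 4 * (sin (pi * s))^2"
    by (simp add: cmod_cis_minus_1)
  also have "(cmod (w - 1))^2 = 4 * (sin (pi * s / real M))^2"
    unfolding w_def u_def cmod_cis_minus_1 by simp
  finally have eq: "(cmod ((1 / of_nat M) * (\<Sum>y<M. cis (real y * (2 * pi * s / real M)))))^2
     = (sin (pi * s))^2 / ((real M * sin (pi * s / real M))^2)"
    by (simp add: power_mult_distrib)
  have pos: "0 < (real M * sin (pi * s / real M))^2"
  proof -
    have "sin (pi * s / real M) \<noteq> 0"
    proof
      assume "sin (pi * s / real M) = 0"
      moreover have "\<bar>pi * s / real M\<bar> < pi"
      proof -
        have "\<bar>pi * s / real M\<bar> = pi * \<bar>s\<bar> / real M" by (simp add: abs_mult)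
        also have "\<dots> \<le> pi * \<bar>s\<bar>" using Mge by (intro div_le_self_real) auto
        also have "\<dots> < pi * 1" using s by (intro mult_strict_left_mono) auto
        finally show ?thesis by simp
      qed
      moreover have "\<bar>pi * s / real M\<bar> < pi \<Longrightarrow> - pi < pi * s / real M \<and> pi * s / real M < pi"
        by linarith
      ultimately have "pi * s / real M = 0" using sin_eq_0_pi[of "pi * s / real M"] by simp
      thus False using s M by simp
    qed
    thus ?thesis using M by simp
  qed
  have le: "(real M * sin (pi * s / real M))^2 \<le> (pi * s)^2"
  proof -
    have "\<bar>real M * sin (pi * s / real M)\<bar> = real M * \<bar>sin (pi * s / real M)\<bar>" by (simp add: abs_mult)
    also have "\<dots> \<le> real M * \<bar>pi * s / real M\<bar>"
      using abs_sin_x_le_abs_x[of "pi * s / real M"] M by (intro mult_left_mono) auto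
    also have "\<dots> = \<bar>pi * s\<bar>" using M by (simp add: abs_mult)
    finally show ?thesis by (metis abs_ge_zero power2_abs power_mono)
  qed
  have "(sin (pi * s))^2 / (pi * s)^2 \<le> (sin (pi * s))^2 / ((real M * sin (pi * s / real M))^2)"
  proof (rule divide_left_mono[OF le])
    have "0 < (pi * s)^2" using s by simp
    thus "0 < (pi * s)\<^sup>2 * (real M * sin (pi * s / real M))\<^sup>2" using pos by simp
  qed simp
  thus ?thesis unfolding eq by (simp add: power_divide)
qed

definition pe_prob :: "nat \<Rightarrow> real \<Rightarrow> nat \<Rightarrow> real" where
  "pe_prob M phi x = (cmod (pe_amp M (cis phi) x))^2"

lemma pe_amp_cis: "pe_amp M (cis phi) x = (1 / of_nat M) * (\<Sum>y<M. cis (real y * (phi - 2 * pi * real x / real M)))"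
  unfolding pe_amp_def dft_kernel_def DeMoivre
  by (simp add: cis_mult algebra_simps diff_divide_distrib)

lemma cis_per: "cis (real y * (u - 2 * pi)) = cis (real y * u)"
proof -
  have "real y * (u - 2 * pi) = real y * u + 2 * pi * (- real y)" by (simp add: algebra_simps)
  moreover have "cis (2 * pi * (- real y)) = 1" by (rule cis_multiple_2pi) simp
  ultimately show ?thesis by (metis cis_mult mult_1_right)
qed

lemma pe_prob_ge_sinc:
  assumes M: "0 < M" and s: "\<bar>s\<bar> < 1"
    and ph: "phi - 2 * pi * real x / real M = 2 * pi * s / real M \<or> phi - 2 * pi * real x / real M = 2 * pi * s / real M - 2 * pi"
  shows "pe_prob M phi x \<ge> (if s = 0 then 1 else (sin (pi * s) / (pi * s))^2)"
proof -
  have "pe_amp M (cis phi) x = (1 / of_nat M) * (\<Sum>y<M. cis (real y * (2 * pi * s / real M)))"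
    unfolding pe_amp_cis using ph cis_per by auto
  hence e: "pe_prob M phi x = (cmod ((1 / of_nat M) * (\<Sum>y<M. cis (real y * (2 * pi * s / real M)))))^2"
    unfolding pe_prob_def by simp
  show ?thesis
  proof (cases "s = 0")
    case True thus ?thesis using M by (simp add: e)
  next
    case False thus ?thesis using fejer_ge_sinc_sq[OF M False s] by (simp add: e)
  qed
qed

lemma pe_prob_sum:
  assumes M: "0 < M"
  shows "(\<Sum>x<M. pe_prob M phi x) = 1"
proof -
  have "(\<Sum>x<M. pe_prob M phi x) = (\<Sum>x<M. (cmod (\<Sum>y<M. dft_kernel (-1) M x y * cis phi ^ y))^2) / (real M)^2"
  proof -
    have "pe_prob M phi x = (cmod (\<Sum>y<M. dft_kernel (-1) M x y * cis phi ^ y))^2 / (real M)^2" for x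
      unfolding pe_prob_def pe_amp_def norm_mult power_mult_distrib by (simp add: norm_divide power_divide)
    thus ?thesis by (simp add: sum_divide_distrib)
  qed
  also have "\<dots> = real M * (\<Sum>y<M. (cmod (cis phi ^ y))^2) / (real M)^2"
    using dft_parseval[OF M, of "-1" "\<lambda>y. cis phi ^ y"] by simp
  also have "\<dots> = 1" using M by (simp add: norm_power power2_eq_square)
  finally show ?thesis .
qed

lemma pe_prob_nonneg: "0 \<le> pe_prob M phi x"
  unfolding pe_prob_def by simp

lemma est_phase_neg_iff: "x < M \<Longrightarrow> (est_phase M x < 0) \<longleftrightarrow> M < 2 * x"
  unfolding est_phase_def by (auto simp: field_simps mult_less_0_iff)

lemma sum_two_le:
  assumes "a \<in> S" "b \<in> S" "a \<noteq> b" "finite S" "\<And>x. 0 \<le> g x"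
  shows "g a + g (b::nat) \<le> (\<Sum>x\<in>S. g x :: real)"
proof -
  have "(\<Sum>x\<in>{a,b}. g x) \<le> (\<Sum>x\<in>S. g x)"
    using assms by (intro sum_mono2) auto
  thus ?thesis using assms by simp
qed

lemma sum_one_le:
  assumes "a \<in> S" "finite S" "\<And>x. 0 \<le> g x"
  shows "g (a::nat) \<le> (\<Sum>x\<in>S. g x :: real)"
proof -
  have "(\<Sum>x\<in>{a}. g x) \<le> (\<Sum>x\<in>S. g x)"
    using assms by (intro sum_mono2) auto
  thus ?thesis using assms by simp
qed

lemma sinc_sq_one_minus: "(sin (pi * (f - 1)) / (pi * (f - 1)))^2 = (sin (pi * (1 - f)) / (pi * (1 - f)))^2"
proof -
  have "pi * (f - 1) = - (pi * (1 - f))" by (simp add: algebra_simps)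
  thus ?thesis by (simp add: power2_eq_square)
qed

lemma sinc_sq_uminus: "(sin (pi * (- f)) / (pi * (- f)))^2 = (sin (pi * f) / (pi * f))^2"
  by (simp add: power2_eq_square)

lemma split_phase_index:
  assumes th: "1 \<le> theta" "4 * theta \<le> real M"
  obtains x0 f where "real x0 + f = theta" "0 \<le> f" "f < 1" "1 \<le> x0" "4 \<le> M"
    "4 * real x0 \<le> real M" "0 < f \<Longrightarrow> 4 * real x0 < real M"
proof -
  define x0 where "x0 = nat \<lfloor>theta\<rfloor>"
  have rx: "real x0 = of_int \<lfloor>theta\<rfloor>" unfolding x0_def using th by simp
  define f where "f = theta - real x0"
  have "real x0 \<le> theta" "theta < real x0 + 1" unfolding rx by linarith+
  moreover have "1 \<le> x0" using th unfolding x0_def by linarith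
  moreover have "4 \<le> M" using th by linarith
  ultimately show ?thesis using that[of x0 f] th unfolding f_def by auto
qed

lemma pe_correct_sign_pos:
  assumes M: "0 < M" and th: "1 \<le> theta" "4 * theta \<le> real M"
  shows "(\<Sum>x\<in>{x. x < M \<and> \<not> est_phase M x < 0}. pe_prob M (2 * pi * theta / real M) x) \<ge> 11/20"
proof -
  obtain x0 f where o: "real x0 + f = theta" "0 \<le> f" "f < 1" "1 \<le> x0" "4 \<le> M"
    "4 * real x0 \<le> real M" "0 < f \<Longrightarrow> 4 * real x0 < real M"
    using split_phase_index[OF th] by blast
  let ?S = "{x. x < M \<and> \<not> est_phase M x < 0}"
  have fin: "finite ?S" by simp
  have x0S: "x0 \<in> ?S" using o est_phase_neg_iff[of x0 M] by auto
  have e0: "2 * pi * theta / real M - 2 * pi * real x0 / real M = 2 * pi * f / real M"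
    unfolding o(1)[symmetric] using M by (simp add: field_simps)
  have p0: "pe_prob M (2 * pi * theta / real M) x0 \<ge> (if f = 0 then 1 else (sin (pi * f) / (pi * f))^2)"
    by (rule pe_prob_ge_sinc[OF M]) (use o e0 in auto)
  show ?thesis
  proof (cases "f = 0")
    case True
    hence "1 \<le> pe_prob M (2 * pi * theta / real M) x0" using p0 by simp
    also have "\<dots> \<le> (\<Sum>x\<in>?S. pe_prob M (2 * pi * theta / real M) x)"
      by (rule sum_one_le[OF x0S fin pe_prob_nonneg])
    finally show ?thesis by simp
  next
    case False
    have x1S: "Suc x0 \<in> ?S"
    proof -
      have "2 * real (Suc x0) \<le> real M" using o by simp
      hence "2 * Suc x0 \<le> M" by linarith
      thus ?thesis using est_phase_neg_iff[of "Suc x0" M] by auto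
    qed
    have e1: "2 * pi * theta / real M - 2 * pi * real (Suc x0) / real M = 2 * pi * (f - 1) / real M"
      unfolding o(1)[symmetric] using M by (simp add: field_simps)
    have p1: "pe_prob M (2 * pi * theta / real M) (Suc x0) \<ge> (if f - 1 = 0 then 1 else (sin (pi * (f - 1)) / (pi * (f - 1)))^2)"
      by (rule pe_prob_ge_sinc[OF M]) (use o e1 False in auto)
    have "11/20 \<le> (sin (pi * f) / (pi * f))^2 + (sin (pi * (1 - f)) / (pi * (1 - f)))^2"
      using sinc_sq_pair_ge[of f] False o by simp
    also have "\<dots> \<le> pe_prob M (2 * pi * theta / real M) x0 + pe_prob M (2 * pi * theta / real M) (Suc x0)"
      using p0 p1 False o sinc_sq_one_minus[of f] by simp
    also have "\<dots> \<le> (\<Sum>x\<in>?S. pe_prob M (2 * pi * theta / real M) x)"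
      by (rule sum_two_le[OF x0S x1S _ fin pe_prob_nonneg]) simp
    finally show ?thesis .
  qed
qed

lemma pe_correct_sign_neg:
  assumes M: "0 < M" and th: "1 \<le> theta" "4 * theta \<le> real M"
  shows "(\<Sum>x\<in>{x. x < M \<and> est_phase M x < 0}. pe_prob M (- (2 * pi * theta / real M)) x) \<ge> 11/20"
proof -
  obtain x0 f where o: "real x0 + f = theta" "0 \<le> f" "f < 1" "1 \<le> x0" "4 \<le> M"
    "4 * real x0 \<le> real M" "0 < f \<Longrightarrow> 4 * real x0 < real M"
    using split_phase_index[OF th] by blast
  let ?S = "{x. x < M \<and> est_phase M x < 0}"
  let ?ph = "- (2 * pi * theta / real M)"
  have fin: "finite ?S" by simp
  have x0M: "x0 < M" using o by linarith
  have x0S: "M - x0 \<in> ?S"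
  proof -
    have "M < 2 * (M - x0)" using o x0M by linarith
    thus ?thesis using est_phase_neg_iff[of "M - x0" M] o by auto
  qed
  have e0: "?ph - 2 * pi * real (M - x0) / real M = 2 * pi * (- f) / real M - 2 * pi"
    unfolding o(1)[symmetric] using x0M M by (simp add: field_simps of_nat_diff)
  have p0: "pe_prob M ?ph (M - x0) \<ge> (if - f = 0 then 1 else (sin (pi * (- f)) / (pi * (- f)))^2)"
    by (rule pe_prob_ge_sinc[OF M]) (use o e0 in auto)
  show ?thesis
  proof (cases "f = 0")
    case True
    hence "1 \<le> pe_prob M ?ph (M - x0)" using p0 by simp
    also have "\<dots> \<le> (\<Sum>x\<in>?S. pe_prob M ?ph x)"
      by (rule sum_one_le[OF x0S fin pe_prob_nonneg])
    finally show ?thesis by simp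
  next
    case False
    have lt: "4 * real x0 < real M" using o False by simp
    have x1S: "M - Suc x0 \<in> ?S"
    proof -
      have "M < 2 * (M - Suc x0)" using lt o by linarith
      thus ?thesis using est_phase_neg_iff[of "M - Suc x0" M] o by auto
    qed
    have e1: "?ph - 2 * pi * real (M - Suc x0) / real M = 2 * pi * (1 - f) / real M - 2 * pi"
      unfolding o(1)[symmetric] using lt M by (simp add: field_simps of_nat_diff)
    have p1: "pe_prob M ?ph (M - Suc x0) \<ge> (if 1 - f = 0 then 1 else (sin (pi * (1 - f)) / (pi * (1 - f)))^2)"
      by (rule pe_prob_ge_sinc[OF M]) (use o e1 False in auto)
    have "11/20 \<le> (sin (pi * f) / (pi * f))^2 + (sin (pi * (1 - f)) / (pi * (1 - f)))^2"
      using sinc_sq_pair_ge[of f] False o by simp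
    also have "\<dots> \<le> pe_prob M ?ph (M - x0) + pe_prob M ?ph (M - Suc x0)"
      using p0 p1 False o sinc_sq_uminus[of f] by simp
    also have "\<dots> \<le> (\<Sum>x\<in>?S. pe_prob M ?ph x)"
      by (rule sum_two_le[OF x0S x1S _ fin pe_prob_nonneg]) (use x0M in simp)
    finally show ?thesis .
  qed
qed

lemma pe_correct_sign_zero:
  assumes M: "0 < M"
  shows "(\<Sum>x\<in>{x. x < M \<and> \<not> est_phase M x < 0}. pe_prob M 0 x) \<ge> 11/20"
proof -
  let ?S = "{x. x < M \<and> \<not> est_phase M x < 0}"
  have x0S: "0 \<in> ?S" using M est_phase_neg_iff[of 0 M] by auto
  have "pe_prob M 0 0 \<ge> (if 0 = (0::real) then 1 else (sin (pi * 0) / (pi * 0))^2)"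
    by (rule pe_prob_ge_sinc[OF M]) auto
  hence "1 \<le> pe_prob M 0 0" by simp
  also have "\<dots> \<le> (\<Sum>x\<in>?S. pe_prob M 0 x)"
    by (rule sum_one_le[OF x0S _ pe_prob_nonneg]) simp
  finally show ?thesis by simp
qed

lemma cmat_carrier[simp]: "cmat A \<in> carrier_mat n m \<longleftrightarrow> A \<in> carrier_mat n m"
  unfolding cmat_def by simp

lemma reflection_carrier: "reflection n mu \<in> carrier_mat n n"
  unfolding reflection_def by simp

lemma reflection_transpose: "transpose_mat (reflection n mu) = reflection n mu"
  unfolding reflection_def by (intro eq_matI) auto

lemma sum_delta_l: "i < n \<Longrightarrow> (\<Sum>k<n. (if i = k then 1 else 0) * f k) = (f i :: real)" for n :: nat
proof -
  assume i: "i < n"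
  have "(\<Sum>k<n. (if i = k then 1 else 0) * f k) = (\<Sum>k<n. if k = i then f k else 0)" by (rule sum.cong) auto
  also have "\<dots> = f i" using i by (subst sum.delta) auto
  finally show ?thesis .
qed

lemma sum_delta_r: "j < n \<Longrightarrow> (\<Sum>k<n. (if k = j then 1 else 0) * f k) = (f j :: real)" for n :: nat
  using sum_delta_l[of j n f] by (simp add: eq_commute)

lemma reflection_square:
  assumes mu: "mu \<in> carrier_vec n" "mu \<bullet> mu = 1"
  shows "reflection n mu * reflection n mu = 1\<^sub>m n"
proof (rule eq_matI)
  fix i j assume ij: "i < dim_row (1\<^sub>m n :: real mat)" "j < dim_col (1\<^sub>m n :: real mat)"
  hence ij': "i < n" "j < n" by auto
  have s1: "(\<Sum>k<n. (mu $ k)^2) = 1" using mu by (simp add: scalar_prod_def power2_eq_square lessThan_atLeast0)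
  have "(reflection n mu * reflection n mu) $$ (i,j)
     = (\<Sum>k<n. ((if i = k then 1 else 0) - 2 * mu $ i * mu $ k) * ((if k = j then 1 else 0) - 2 * mu $ k * mu $ j))"
    using ij' unfolding reflection_def by (simp add: scalar_prod_def row_def col_def lessThan_atLeast0)
  also have "\<dots> = (\<Sum>k<n. (if i = k then 1 else 0) * (if k = j then 1 else 0))
      - 2 * mu $ j * (\<Sum>k<n. (if i = k then 1 else 0) * mu $ k)
      - 2 * mu $ i * (\<Sum>k<n. (if k = j then 1 else 0) * mu $ k)
      + 4 * mu $ i * mu $ j * (\<Sum>k<n. (mu $ k)^2)"
    by (simp add: algebra_simps sum.distrib sum_subtractf sum_distrib_left power2_eq_square)
  also have "\<dots> = (if i = j then 1 else 0)"
    using ij' s1 by (simp add: sum_delta_l sum_delta_r)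
  finally show "(reflection n mu * reflection n mu) $$ (i,j) = 1\<^sub>m n $$ (i,j)" using ij' by simp
qed (auto simp: reflection_def)

lemma madj_cmat: "madj (cmat A) = cmat (transpose_mat A)"
  unfolding madj_def cmat_def by (intro eq_matI) auto

lemma cmat_mult: "A \<in> carrier_mat n m \<Longrightarrow> B \<in> carrier_mat m p \<Longrightarrow> cmat (A * B) = cmat A * cmat B"
  unfolding cmat_def by (rule of_real_hom.mat_hom_mult)

lemma cmat_one: "cmat (1\<^sub>m n) = 1\<^sub>m n"
  unfolding cmat_def by (rule of_real_hom.mat_hom_one)

lemma unitary_walk:
  assumes U2: "U2 \<in> carrier_mat n n" "U2 * transpose_mat U2 = 1\<^sub>m n"
    and mu: "mu \<in> carrier_vec n" "mu \<bullet> mu = 1"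
  shows "madj (cmat U2 * cmat (reflection n mu)) * (cmat U2 * cmat (reflection n mu)) = 1\<^sub>m n"
proof -
  let ?R = "reflection n mu"
  have R: "?R \<in> carrier_mat n n" by (rule reflection_carrier)
  have tU: "transpose_mat U2 \<in> carrier_mat n n" using U2 by simp
  have TT: "transpose_mat U2 * U2 = 1\<^sub>m n" by (rule mat_mult_left_right_inverse[OF U2(1) tU U2(2)])
  have e: "cmat U2 * cmat ?R = cmat (U2 * ?R)" using cmat_mult[OF U2(1) R] by simp
  have UR: "U2 * ?R \<in> carrier_mat n n" using U2 R by simp
  have X: "transpose_mat (U2 * ?R) * (U2 * ?R) = 1\<^sub>m n"
  proof -
    have "transpose_mat (U2 * ?R) * (U2 * ?R) = (?R * transpose_mat U2) * (U2 * ?R)"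
      by (simp only: transpose_mult[OF U2(1) R] reflection_transpose)
    also have "\<dots> = ?R * (transpose_mat U2 * (U2 * ?R))"
      using R tU UR by (rule assoc_mult_mat)
    also have "transpose_mat U2 * (U2 * ?R) = (transpose_mat U2 * U2) * ?R"
      using tU U2(1) R by (rule assoc_mult_mat[symmetric])
    also have "\<dots> = ?R" using R by (simp only: TT left_mult_one_mat)
    also have "?R * ?R = 1\<^sub>m n" by (rule reflection_square[OF mu])
    finally show ?thesis .
  qed
  have "madj (cmat U2 * cmat ?R) * (cmat U2 * cmat ?R) = cmat (transpose_mat (U2 * ?R) * (U2 * ?R))"
    unfolding e madj_cmat by (rule cmat_mult[symmetric]) (use UR in auto)
  thus ?thesis unfolding X cmat_one .
qed

definition cinner :: "nat \<Rightarrow> complex vec \<Rightarrow> complex vec \<Rightarrow> complex" where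
  "cinner n v w = (\<Sum>a<n. v $ a * cnj (w $ a))"

lemma mat_vec_idx: "A \<in> carrier_mat n n \<Longrightarrow> v \<in> carrier_vec n \<Longrightarrow> a < n \<Longrightarrow> (A *\<^sub>v v) $ a = (\<Sum>b<n. A $$ (a,b) * v $ b)"
  by (simp add: scalar_prod_def row_def lessThan_atLeast0)

lemma madj_carrier: "A \<in> carrier_mat n n \<Longrightarrow> madj A \<in> carrier_mat n n"
  unfolding madj_def by auto

lemma madj_idx: "A \<in> carrier_mat n n \<Longrightarrow> a < n \<Longrightarrow> b < n \<Longrightarrow> madj A $$ (a,b) = cnj (A $$ (b,a))"
  unfolding madj_def by simp

lemma cinner_mult_madj:
  assumes A: "A \<in> carrier_mat n n" and v: "v \<in> carrier_vec n" and w: "w \<in> carrier_vec n"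
  shows "cinner n (A *\<^sub>v v) w = cinner n v (madj A *\<^sub>v w)"
proof -
  have "cinner n (A *\<^sub>v v) w = (\<Sum>a<n. \<Sum>b<n. A $$ (a,b) * v $ b * cnj (w $ a))"
    unfolding cinner_def using A v by (simp add: mat_vec_idx sum_distrib_right del: index_mult_mat_vec)
  also have "\<dots> = (\<Sum>b<n. \<Sum>a<n. A $$ (a,b) * v $ b * cnj (w $ a))" by (rule sum.swap)
  also have "\<dots> = cinner n v (madj A *\<^sub>v w)"
    unfolding cinner_def using A w madj_carrier[OF A]
    by (simp add: mat_vec_idx[OF madj_carrier[OF A] w] madj_idx[OF A] sum_distrib_left mult_ac del: index_mult_mat_vec)
  finally show ?thesis .
qed

lemma cinner_smult_left: "v \<in> carrier_vec n \<Longrightarrow> cinner n (c \<cdot>\<^sub>v v) w = c * cinner n v w"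
  unfolding cinner_def by (simp add: sum_distrib_left mult_ac)

lemma cinner_smult_right: "w \<in> carrier_vec n \<Longrightarrow> cinner n v (c \<cdot>\<^sub>v w) = cnj c * cinner n v w"
  unfolding cinner_def by (simp add: sum_distrib_left mult_ac)

lemma madj_eigenvector:
  assumes A: "A \<in> carrier_mat n n" and un: "madj A * A = 1\<^sub>m n" and v: "v \<in> carrier_vec n"
    and ev: "A *\<^sub>v v = l \<cdot>\<^sub>v v" and l: "cmod l = 1"
  shows "madj A *\<^sub>v v = cnj l \<cdot>\<^sub>v v"
proof -
  have mA: "madj A \<in> carrier_mat n n" by (rule madj_carrier[OF A])
  have "v = 1\<^sub>m n *\<^sub>v v" using v by simp
  also have "\<dots> = (madj A * A) *\<^sub>v v" by (simp only: un)
  also have "\<dots> = madj A *\<^sub>v (l \<cdot>\<^sub>v v)" using mA A v by (simp add: ev)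
  also have "\<dots> = l \<cdot>\<^sub>v (madj A *\<^sub>v v)" using mA v by (rule mult_mat_vec)
  finally have e: "v = l \<cdot>\<^sub>v (madj A *\<^sub>v v)" .
  have cl: "cnj l * l = 1"
    by (metis l complex_norm_square mult.commute norm_one of_real_1 one_power2)
  have "cnj l \<cdot>\<^sub>v v = (cnj l * l) \<cdot>\<^sub>v (madj A *\<^sub>v v)" by (subst e) (simp add: smult_smult_assoc)
  thus ?thesis using cl by simp
qed

lemma unitary_eigenvectors_orthogonal:
  assumes A: "A \<in> carrier_mat n n" and un: "madj A * A = 1\<^sub>m n"
    and v: "v \<in> carrier_vec n" and w: "w \<in> carrier_vec n"
    and ev: "A *\<^sub>v v = l \<cdot>\<^sub>v v" and ew: "A *\<^sub>v w = m \<cdot>\<^sub>v w" and m: "cmod m = 1" and lm: "l \<noteq> m"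
  shows "cinner n v w = 0"
proof -
  have "l * cinner n v w = cinner n (A *\<^sub>v v) w" using v by (simp add: ev cinner_smult_left)
  also have "\<dots> = cinner n v (madj A *\<^sub>v w)" by (rule cinner_mult_madj[OF A v w])
  also have "\<dots> = m * cinner n v w" using madj_eigenvector[OF A un w ew m] w by (simp add: cinner_smult_right)
  finally show ?thesis using lm by simp
qed

lemma eigenvector_mat_pow:
  fixes A :: "complex mat"
  assumes A: "A \<in> carrier_mat n n" and v: "v \<in> carrier_vec n" and ev: "A *\<^sub>v v = l \<cdot>\<^sub>v v"
  shows "A ^\<^sub>m i *\<^sub>v v = l ^ i \<cdot>\<^sub>v v"
proof (induct i)
  case 0 show ?case using v A by simp
next
  case (Suc i)
  define P where "P = A ^\<^sub>m i"
  have P: "P \<in> carrier_mat n n" using A unfolding P_def by simp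
  have "A ^\<^sub>m Suc i = P * A" unfolding P_def by simp
  also have "\<dots> *\<^sub>v v = P *\<^sub>v (A *\<^sub>v v)" using P A v by simp
  also have "A *\<^sub>v v = l \<cdot>\<^sub>v v" by (rule ev)
  also have "P *\<^sub>v (l \<cdot>\<^sub>v v) = l \<cdot>\<^sub>v (P *\<^sub>v v)" using P v by (rule mult_mat_vec)
  also have "(P *\<^sub>v v) = (l ^ i) \<cdot>\<^sub>v v" unfolding P_def by (rule Suc)
  finally show ?case by (simp add: smult_smult_assoc mult.commute)
qed

definition eigen_expansion :: "nat \<Rightarrow> 'e set \<Rightarrow> ('e \<Rightarrow> complex vec) \<Rightarrow> ('e \<Rightarrow> nat list \<Rightarrow> complex) \<Rightarrow> qstate \<Rightarrow> bool" where
  "eigen_expansion n E psi g f = (\<forall>a<n. \<forall>xs. f (a, xs) = (\<Sum>e\<in>E. psi e $ a * g e xs))"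

lemma eigen_expansion_dft:
  assumes "eigen_expansion n E psi g f"
  shows "eigen_expansion n E psi (\<lambda>e. anc_dft s M r (g e)) (dft_reg s M r f)"
  unfolding eigen_expansion_def
proof (intro allI impI)
  fix a xs assume a: "a < n"
  have "dft_reg s M r f (a, xs) = (1 / complex_of_real (sqrt (real M))) *
      (\<Sum>y<M. dft_kernel s M (xs!r) y * (\<Sum>e\<in>E. psi e $ a * g e (xs[r := y])))"
    unfolding dft_reg_def dft_kernel_def using assms a by (simp add: eigen_expansion_def)
  also have "\<dots> = (\<Sum>y<M. \<Sum>e\<in>E. (1 / complex_of_real (sqrt (real M))) * (dft_kernel s M (xs!r) y * (psi e $ a * g e (xs[r := y]))))"
    by (simp add: sum_distrib_left)
  also have "\<dots> = (\<Sum>e\<in>E. \<Sum>y<M. (1 / complex_of_real (sqrt (real M))) * (dft_kernel s M (xs!r) y * (psi e $ a * g e (xs[r := y]))))"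
    by (rule sum.swap)
  also have "\<dots> = (\<Sum>e\<in>E. psi e $ a * anc_dft s M r (g e) xs)"
    unfolding anc_dft_def by (simp add: sum_distrib_left mult_ac)
  finally show "dft_reg s M r f (a, xs) = (\<Sum>e\<in>E. psi e $ a * anc_dft s M r (g e) xs)" .
qed

lemma mat_pow_mult_vec_index:
  fixes V :: "complex mat"
  assumes V: "V \<in> carrier_mat n n" and p: "psi \<in> carrier_vec n" and a: "a < n"
  shows "g * (\<Sum>b<n. (V ^\<^sub>m m) $$ (a, b) * psi $ b) = g * ((V ^\<^sub>m m) *\<^sub>v psi) $ a"
proof -
  have P: "(V ^\<^sub>m m) \<in> carrier_mat n n" using V by simp
  show ?thesis by (simp only: mat_vec_idx[OF P p a])
qed

lemma eigenvector_mat_pow_index: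
  fixes V :: "complex mat"
  assumes V: "V \<in> carrier_mat n n" and p: "psi \<in> carrier_vec n" and a: "a < n" and ev: "V *\<^sub>v psi = l \<cdot>\<^sub>v psi"
  shows "g xs * ((V ^\<^sub>m (xs!r)) *\<^sub>v psi) $ a = psi $ a * anc_phase l r g xs"
proof -
  have "(V ^\<^sub>m (xs!r)) *\<^sub>v psi = l ^ (xs!r) \<cdot>\<^sub>v psi"
    by (rule eigenvector_mat_pow[OF V p ev])
  moreover have "dim_vec psi = n" using p by (rule carrier_vecD)
  hence "(l ^ (xs!r) \<cdot>\<^sub>v psi) $ a = l ^ (xs!r) * psi $ a"
    using a index_smult_vec(1)[of a psi] by simp
  ultimately show ?thesis unfolding anc_phase_def by (simp only: mult_ac)
qed
lemma eigen_expansion_cpow: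
  fixes V :: "complex mat"
  assumes sf: "eigen_expansion n E psi g f" and V: "V \<in> carrier_mat n n"
    and ev: "\<And>e. e \<in> E \<Longrightarrow> psi e \<in> carrier_vec n \<and> V *\<^sub>v psi e = l e \<cdot>\<^sub>v psi e"
  shows "eigen_expansion n E psi (\<lambda>e. anc_phase (l e) r (g e)) (cpow_reg n V r f)"
  unfolding eigen_expansion_def
proof (intro allI impI)
  fix a :: nat and xs :: "nat list" assume a: "a < n"
  let ?m = "xs ! r"
  have "cpow_reg n V r f (a, xs) = (\<Sum>b<n. (V ^\<^sub>m ?m) $$ (a, b) * (\<Sum>e\<in>E. psi e $ b * g e xs))"
    unfolding cpow_reg_def using sf by (simp add: eigen_expansion_def)
  also have "\<dots> = (\<Sum>b<n. \<Sum>e\<in>E. (V ^\<^sub>m ?m) $$ (a, b) * (psi e $ b * g e xs))"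
    by (simp add: sum_distrib_left)
  also have "\<dots> = (\<Sum>e\<in>E. \<Sum>b<n. (V ^\<^sub>m ?m) $$ (a, b) * (psi e $ b * g e xs))"
    by (rule sum.swap)
  also have "\<dots> = (\<Sum>e\<in>E. g e xs * (\<Sum>b<n. (V ^\<^sub>m ?m) $$ (a, b) * psi e $ b))"
    by (simp add: sum_distrib_left mult_ac)
  also have "\<dots> = (\<Sum>e\<in>E. psi e $ a * anc_phase (l e) r (g e) xs)"
  proof (rule sum.cong[OF refl])
    fix e assume e: "e \<in> E"
    have p: "psi e \<in> carrier_vec n" and eq: "V *\<^sub>v psi e = l e \<cdot>\<^sub>v psi e" using ev[OF e] by auto
    show "g e xs * (\<Sum>b<n. (V ^\<^sub>m ?m) $$ (a, b) * psi e $ b) = psi e $ a * anc_phase (l e) r (g e) xs"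
      unfolding mat_pow_mult_vec_index[OF V p a] by (rule eigenvector_mat_pow_index[OF V p a eq])
  qed
  finally show "cpow_reg n V r f (a, xs) = (\<Sum>e\<in>E. psi e $ a * anc_phase (l e) r (g e) xs)" .
qed

lemma eigen_expansion_flip:
  assumes "eigen_expansion n E psi g f"
  shows "eigen_expansion n E psi (\<lambda>e. anc_flip M k (g e)) (majority_flip M k f)"
  using assms unfolding eigen_expansion_def majority_flip_def anc_flip_def by (auto simp: sum_negf)

lemma eigen_expansion_pe:
  fixes V :: "complex mat"
  assumes sf: "eigen_expansion n E psi g f" and V: "V \<in> carrier_mat n n"
    and ev: "\<And>e. e \<in> E \<Longrightarrow> psi e \<in> carrier_vec n \<and> V *\<^sub>v psi e = l e \<cdot>\<^sub>v psi e"
  shows "eigen_expansion n E psi (\<lambda>e. anc_pe (l e) M r (g e)) (pe_reg n V M r f)"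
proof -
  have "eigen_expansion n E psi (\<lambda>e. anc_dft (-1) M r (anc_phase (l e) r (anc_dft 1 M r (g e))))
          (dft_reg (-1) M r (cpow_reg n V r (dft_reg 1 M r f)))"
    by (intro eigen_expansion_dft eigen_expansion_cpow[OF _ V ev]) (use sf in auto)
  thus ?thesis unfolding pe_reg_def anc_pe_def comp_def .
qed

lemma eigen_expansion_pe_inv:
  fixes V :: "complex mat"
  assumes sf: "eigen_expansion n E psi g f" and V: "madj V \<in> carrier_mat n n"
    and ev: "\<And>e. e \<in> E \<Longrightarrow> psi e \<in> carrier_vec n \<and> madj V *\<^sub>v psi e = cnj (l e) \<cdot>\<^sub>v psi e"
  shows "eigen_expansion n E psi (\<lambda>e. anc_pe (cnj (l e)) M r (g e)) (pe_inv_reg n V M r f)"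
proof -
  have "eigen_expansion n E psi (\<lambda>e. anc_dft (-1) M r (anc_phase (cnj (l e)) r (anc_dft 1 M r (g e))))
          (dft_reg (-1) M r (cpow_reg n (madj V) r (dft_reg 1 M r f)))"
    by (intro eigen_expansion_dft eigen_expansion_cpow[OF _ V ev]) (use sf in auto)
  thus ?thesis unfolding pe_inv_reg_def anc_pe_def comp_def .
qed

lemma eigen_expansion_pe_all:
  fixes V :: "complex mat"
  assumes sf: "eigen_expansion n E psi g f" and V: "V \<in> carrier_mat n n"
    and ev: "\<And>e. e \<in> E \<Longrightarrow> psi e \<in> carrier_vec n \<and> V *\<^sub>v psi e = l e \<cdot>\<^sub>v psi e"
  shows "eigen_expansion n E psi (\<lambda>e. anc_pe_all (l e) M j (g e)) (pe_all n V M j f)"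
proof (induction j)
  case 0 thus ?case using sf by simp
next
  case (Suc j) thus ?case using eigen_expansion_pe[OF Suc V ev] by simp
qed

lemma eigen_expansion_pe_inv_all:
  fixes V :: "complex mat"
  assumes sf: "eigen_expansion n E psi g f" and V: "madj V \<in> carrier_mat n n"
    and ev: "\<And>e. e \<in> E \<Longrightarrow> psi e \<in> carrier_vec n \<and> madj V *\<^sub>v psi e = cnj (l e) \<cdot>\<^sub>v psi e"
  shows "eigen_expansion n E psi (\<lambda>e. anc_pe_inv_all (l e) M j (g e)) (pe_inv_all n V M j f)"
  using sf
proof (induction j arbitrary: g f)
  case 0 thus ?case by simp
next
  case (Suc j)
  have "eigen_expansion n E psi (\<lambda>e. anc_pe (cnj (l e)) M j (g e)) (pe_inv_reg n V M j f)"
    by (rule eigen_expansion_pe_inv[OF Suc.prems V ev])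
  from Suc.IH[OF this] show ?case by simp
qed

lemma eigen_expansion_Rotate:
  fixes V :: "complex mat"
  assumes sf: "eigen_expansion n E psi g f" and V: "V \<in> carrier_mat n n" and V': "madj V \<in> carrier_mat n n"
    and ev: "\<And>e. e \<in> E \<Longrightarrow> psi e \<in> carrier_vec n \<and> V *\<^sub>v psi e = l e \<cdot>\<^sub>v psi e"
    and ev': "\<And>e. e \<in> E \<Longrightarrow> madj V *\<^sub>v psi e = cnj (l e) \<cdot>\<^sub>v psi e"
  shows "eigen_expansion n E psi (\<lambda>e. anc_pe_inv_all (l e) (pe_size T) k (anc_flip (pe_size T) k (anc_pe_all (l e) (pe_size T) k (g e))))
           (Rotate n V T k f)"
  unfolding Rotate_def comp_def
  by (intro eigen_expansion_pe_inv_all[OF _ V'] eigen_expansion_flip eigen_expansion_pe_all[OF sf V ev]) (use ev ev' in auto)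

lemma cinner_self: "v \<in> carrier_vec n \<Longrightarrow> cinner n v v = complex_of_real (vnorm2 v)"
  unfolding cinner_def vnorm2_def of_real_sum complex_norm_square by simp

lemma norm2_orthogonal_expansion:
  assumes E: "finite E" and car: "\<And>e. e \<in> E \<Longrightarrow> psi e \<in> carrier_vec n"
    and orth: "\<And>e e'. e \<in> E \<Longrightarrow> e' \<in> E \<Longrightarrow> e \<noteq> e' \<Longrightarrow> cinner n (psi e) (psi e') = 0"
  shows "(\<Sum>a<n. (cmod (\<Sum>e\<in>E. psi e $ a * h e))^2) = (\<Sum>e\<in>E. (cmod (h e))^2 * vnorm2 (psi e))"
proof -
  have "complex_of_real (\<Sum>a<n. (cmod (\<Sum>e\<in>E. psi e $ a * h e))^2)
     = (\<Sum>a<n. (\<Sum>e\<in>E. psi e $ a * h e) * cnj (\<Sum>e'\<in>E. psi e' $ a * h e'))"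
    by (simp only: of_real_sum complex_norm_square)
  also have "\<dots> = (\<Sum>a<n. \<Sum>e\<in>E. \<Sum>e'\<in>E. h e * cnj (h e') * (psi e $ a * cnj (psi e' $ a)))"
    by (simp only: cnj_sum sum_product complex_cnj_mult) (simp add: mult_ac)
  also have "\<dots> = (\<Sum>e\<in>E. \<Sum>e'\<in>E. \<Sum>a<n. h e * cnj (h e') * (psi e $ a * cnj (psi e' $ a)))"
    by (rule sum_swap3)
  also have "\<dots> = (\<Sum>e\<in>E. \<Sum>e'\<in>E. h e * cnj (h e') * cinner n (psi e) (psi e'))"
    unfolding cinner_def by (simp add: sum_distrib_left)
  also have "\<dots> = (\<Sum>e\<in>E. h e * cnj (h e) * cinner n (psi e) (psi e))"
  proof (rule sum.cong[OF refl])
    fix e assume e: "e \<in> E"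
    have "(\<Sum>e'\<in>E. h e * cnj (h e') * cinner n (psi e) (psi e')) = (\<Sum>e'\<in>E. if e' = e then h e * cnj (h e) * cinner n (psi e) (psi e) else 0)"
      by (rule sum.cong) (use orth e in auto)
    also have "\<dots> = h e * cnj (h e) * cinner n (psi e) (psi e)" using E e by simp
    finally show "(\<Sum>e'\<in>E. h e * cnj (h e') * cinner n (psi e) (psi e')) = h e * cnj (h e) * cinner n (psi e) (psi e)" .
  qed
  also have "\<dots> = complex_of_real (\<Sum>e\<in>E. (cmod (h e))^2 * vnorm2 (psi e))"
    by (simp only: of_real_sum of_real_mult complex_norm_square cinner_self car cong: sum.cong)
  finally show ?thesis using of_real_eq_iff by blast
qed

lemma split_sum: "(\<Sum>x<M. p x) = (\<Sum>x\<in>{x. x < M \<and> P x}. p x) + (\<Sum>x\<in>{x. x < M \<and> \<not> P x}. (p x :: real))" for M :: nat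
proof -
  have "{..<M} = {x. x < M \<and> P x} \<union> {x. x < M \<and> \<not> P x}" by auto
  hence "(\<Sum>x<M. p x) = (\<Sum>x\<in>{x. x < M \<and> P x} \<union> {x. x < M \<and> \<not> P x}. p x)" by simp
  also have "\<dots> = (\<Sum>x\<in>{x. x < M \<and> P x}. p x) + (\<Sum>x\<in>{x. x < M \<and> \<not> P x}. p x)"
    by (rule sum.union_disjoint) (auto intro: finite_subset[of _ "{..<M}"])
  finally show ?thesis .
qed

lemma split_card: "card {r. r < k \<and> P r} + card {r. r < k \<and> \<not> P r} = (k::nat)"
proof -
  have "{..<k} = {r. r < k \<and> P r} \<union> {r. r < k \<and> \<not> P r}" by auto
  hence "card {..<k} = card ({r. r < k \<and> P r} \<union> {r. r < k \<and> \<not> P r})" by simp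
  also have "\<dots> = card {r. r < k \<and> P r} + card {r. r < k \<and> \<not> P r}"
    by (rule card_Un_disjoint) auto
  finally show ?thesis by simp
qed

lemma anc_pe_all_zero_norm2:
  assumes M: "0 < M" and xs: "xs \<in> anc_dom k M"
  shows "(cmod (anc_pe_all (cis phi) M k (anc_zero k) xs))^2 = (\<Prod>r<k. pe_prob M phi (xs!r))"
  unfolding anc_pe_all_zero[OF M xs] pe_prob_def by (simp add: prod_norm[symmetric] prod_power_distrib)

lemma pe_prob_prod_sum:
  assumes M: "0 < M"
  shows "(\<Sum>xs\<in>anc_dom k M. \<Prod>r<k. pe_prob M phi (xs!r)) = 1"
  using sum_anc_dom_prod[where f = "pe_prob M phi" and k = k and M = M] pe_prob_sum[OF M] by simp

definition majority_neg :: "nat \<Rightarrow> nat \<Rightarrow> nat list \<Rightarrow> bool" where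
  "majority_neg M k xs = (2 * card {r. r < k \<and> est_phase M (xs ! r) < 0} > k)"

text \<open>Squared error of \<open>Rotate\<close> on an eigenvector of eigenphase \<open>phi\<close> with unit coefficient,
  when the intended phase factor is \<open>s\<close>.\<close>
definition rotation_error :: "nat \<Rightarrow> nat \<Rightarrow> real \<Rightarrow> complex \<Rightarrow> real" where
  "rotation_error M k phi s =
     (\<Sum>xs\<in>anc_dom k M. (cmod ((if majority_neg M k xs then -1 else 1) - s))^2 * (\<Prod>r<k. pe_prob M phi (xs!r)))"

lemma rotation_error_nonneg: "0 \<le> rotation_error M k phi s"
  unfolding rotation_error_def by (intro sum_nonneg mult_nonneg_nonneg prod_nonneg) (auto simp: pe_prob_nonneg)

lemma anc_norm2_rotation:
  assumes M: "0 < M"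
  shows "anc_norm2 k M (\<lambda>xs. anc_pe_inv_all (cis phi) M k (anc_flip M k (anc_pe_all (cis phi) M k (\<lambda>ys. c * anc_zero k ys))) xs
            - s * c * anc_zero k xs)
     = (cmod c)^2 * rotation_error M k phi s"
proof -
  let ?l = "cis phi"
  let ?b = "anc_pe_all ?l M k (anc_zero k)"
  have cl: "cmod ?l = 1" by simp
  have "anc_pe_inv_all ?l M k (anc_flip M k (anc_pe_all ?l M k (\<lambda>ys. c * anc_zero k ys))) xs - s * c * anc_zero k xs
     = c * anc_pe_inv_all ?l M k (\<lambda>ys. anc_flip M k ?b ys - s * ?b ys) xs"
    if xs: "xs \<in> anc_dom k M" for xs
  proof -
    have "anc_pe_all ?l M k (\<lambda>ys. c * anc_zero k ys) = (\<lambda>xs. c * ?b xs)"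
      using anc_linear_scale[OF anc_linear_pe_all] by auto
    moreover have "anc_flip M k (\<lambda>xs. c * ?b xs) = (\<lambda>xs. c * anc_flip M k ?b xs)"
      using anc_linear_scale[OF anc_linear_flip] by auto
    moreover have "anc_pe_inv_all ?l M k (\<lambda>xs. c * anc_flip M k ?b xs) = (\<lambda>xs. c * anc_pe_inv_all ?l M k (anc_flip M k ?b) xs)"
      using anc_linear_scale[OF anc_linear_pe_inv_all] by auto
    moreover have "anc_pe_inv_all ?l M k ?b xs = anc_zero k xs"
      using anc_pe_inv_all_pe_all[OF M le_refl cl] xs by simp
    ultimately show ?thesis by (simp add: anc_linear_diff[OF anc_linear_pe_inv_all] algebra_simps)
  qed
  hence "anc_norm2 k M (\<lambda>xs. anc_pe_inv_all ?l M k (anc_flip M k (anc_pe_all ?l M k (\<lambda>ys. c * anc_zero k ys))) xs - s * c * anc_zero k xs)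
     = anc_norm2 k M (\<lambda>xs. c * anc_pe_inv_all ?l M k (\<lambda>ys. anc_flip M k ?b ys - s * ?b ys) xs)"
    by (intro anc_norm2_cong) blast
  also have "\<dots> = (cmod c)^2 * anc_norm2 k M (anc_pe_inv_all ?l M k (\<lambda>ys. anc_flip M k ?b ys - s * ?b ys))"
    unfolding anc_norm2_def by (simp add: norm_mult power_mult_distrib sum_distrib_left)
  also have "anc_norm2 k M (anc_pe_inv_all ?l M k (\<lambda>ys. anc_flip M k ?b ys - s * ?b ys))
      = anc_norm2 k M (\<lambda>ys. anc_flip M k ?b ys - s * ?b ys)"
    by (rule anc_norm2_pe_inv_all[OF M le_refl cl])
  also have "\<dots> = rotation_error M k phi s"
    unfolding anc_norm2_def rotation_error_def
  proof (rule sum.cong[OF refl])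
    fix xs assume xs: "xs \<in> anc_dom k M"
    have "anc_flip M k ?b xs - s * ?b xs = ((if majority_neg M k xs then -1 else 1) - s) * ?b xs"
      unfolding anc_flip_def majority_neg_def by (simp add: algebra_simps)
    thus "(cmod (anc_flip M k ?b xs - s * ?b xs))^2 = (cmod ((if majority_neg M k xs then -1 else 1) - s))^2 * (\<Prod>r<k. pe_prob M phi (xs!r))"
      using anc_pe_all_zero_norm2[OF M xs, of phi] by (simp add: norm_mult power_mult_distrib)
  qed
  finally show ?thesis .
qed

lemma rotation_error_le_4:
  assumes M: "0 < M" and s: "s = 1 \<or> s = -1"
  shows "rotation_error M k phi s \<le> 4"
proof -
  have "rotation_error M k phi s \<le> (\<Sum>xs\<in>anc_dom k M. 4 * (\<Prod>r<k. pe_prob M phi (xs!r)))"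
    unfolding rotation_error_def
  proof (rule sum_mono)
    fix xs
    have "(cmod ((if majority_neg M k xs then -1 else 1) - s))^2 \<le> 4" using s by auto
    moreover have "0 \<le> (\<Prod>r<k. pe_prob M phi (xs!r))" by (intro prod_nonneg) (simp add: pe_prob_nonneg)
    ultimately show "(cmod ((if majority_neg M k xs then -1 else 1) - s))^2 * (\<Prod>r<k. pe_prob M phi (xs!r))
        \<le> 4 * (\<Prod>r<k. pe_prob M phi (xs!r))"
      by (intro mult_right_mono) auto
  qed
  also have "\<dots> = 4" using pe_prob_prod_sum[OF M] by (simp add: sum_distrib_left[symmetric])
  finally show ?thesis .
qed

text \<open>If a single estimation gets the sign right with probability at least \<open>11/20\<close>, the
  majority vote errs only when at least half of the \<open>k\<close> independent estimations err.\<close>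
lemma rotation_error_le_majority:
  assumes M: "0 < M"
    and good: "(\<Sum>x\<in>{x. x < M \<and> (est_phase M x < 0 \<longleftrightarrow> neg)}. pe_prob M phi x) \<ge> 11/20"
  shows "rotation_error M k phi (if neg then -1 else 1) \<le> 4 * (199/200)^k"
proof -
  let ?B = "\<lambda>x. \<not> (est_phase M x < 0 \<longleftrightarrow> neg)"
  let ?s = "if neg then -1 else 1 :: complex"
  have bad: "(\<Sum>x\<in>{x. x < M \<and> ?B x}. pe_prob M phi x) \<le> 9/20"
    using split_sum[of "pe_prob M phi" M "\<lambda>x. est_phase M x < 0 \<longleftrightarrow> neg"] pe_prob_sum[OF M, of phi] good
    by linarith
  have "rotation_error M k phi ?s
     \<le> (\<Sum>xs\<in>anc_dom k M. 4 * (if k \<le> 2 * card {r. r < k \<and> ?B (xs!r)} then \<Prod>r<k. pe_prob M phi (xs!r) else 0))"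
    unfolding rotation_error_def
  proof (rule sum_mono)
    fix xs
    have "0 \<le> (\<Prod>r<k. pe_prob M phi (xs!r))" by (intro prod_nonneg) (simp add: pe_prob_nonneg)
    moreover have "card {r. r < k \<and> est_phase M (xs!r) < 0} + card {r. r < k \<and> \<not> est_phase M (xs!r) < 0} = k"
      by (rule split_card)
    ultimately show "(cmod ((if majority_neg M k xs then -1 else 1) - ?s))^2 * (\<Prod>r<k. pe_prob M phi (xs!r))
       \<le> 4 * (if k \<le> 2 * card {r. r < k \<and> ?B (xs!r)} then \<Prod>r<k. pe_prob M phi (xs!r) else 0)"
      unfolding majority_neg_def by (cases neg) auto
  qed
  also have "\<dots> = 4 * (\<Sum>xs\<in>anc_dom k M. (if k \<le> 2 * card {r. r < k \<and> ?B (xs!r)} then \<Prod>r<k. pe_prob M phi (xs!r) else 0))"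
    by (simp add: sum_distrib_left)
  also have "\<dots> \<le> 4 * (199/200)^k"
    using majority_wrong_prob_le[of "pe_prob M phi" M ?B k] pe_prob_nonneg pe_prob_sum[OF M] bad by simp
  finally show ?thesis .
qed

lemma rotation_error_le_resolved:
  assumes M: "0 < M" and ph: "ph = 0 \<or> 2 * pi / real M \<le> \<bar>ph\<bar> \<and> \<bar>ph\<bar> \<le> pi / 2"
  shows "rotation_error M k ph (if ph < 0 then -1 else 1) \<le> 4 * (199/200)^k"
proof -
  define \<theta> where "\<theta> = \<bar>ph\<bar> * real M / (2 * pi)"
  have \<theta>: "1 \<le> \<theta>" "4 * \<theta> \<le> real M" if "ph \<noteq> 0"
    using ph that M unfolding \<theta>_def by (auto simp: field_simps)
  have ph_\<theta>: "\<bar>ph\<bar> = 2 * pi * \<theta> / real M" unfolding \<theta>_def using M by simp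
  consider "ph = 0" | "0 < ph" | "ph < 0" by linarith
  thus ?thesis
  proof cases
    case 1
    thus ?thesis using rotation_error_le_majority[OF M, where neg = False and phi = 0] pe_correct_sign_zero[OF M]
      by simp
  next
    case 2
    hence "ph \<noteq> 0" "ph = 2 * pi * \<theta> / real M" using ph_\<theta> M by auto
    thus ?thesis using 2 rotation_error_le_majority[OF M, where neg = False and phi = ph]
        pe_correct_sign_pos[OF M \<theta>[OF \<open>ph \<noteq> 0\<close>]] by simp
  next
    case 3
    hence "ph \<noteq> 0" "ph = - (2 * pi * \<theta> / real M)" using ph_\<theta> M by auto
    thus ?thesis using 3 rotation_error_le_majority[OF M, where neg = True and phi = ph]
        pe_correct_sign_neg[OF M \<theta>[OF \<open>ph \<noteq> 0\<close>]] by simp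
  qed
qed

section \<open>The quantum hitting time\<close>

lemma QH_tail_neg:
  assumes apos: "\<forall>j\<in>{1..J}. 0 < \<alpha> j" and y: "y < 0"
  shows "QH_tail J \<delta> \<alpha> dm y = 1"
proof -
  have "{j. 1 \<le> j \<and> j \<le> J \<and> 1 / \<alpha> j > y} = {1..J}"
    using apos y by auto (metis atLeastAtMost_iff less_trans zero_less_divide_1_iff)
  moreover have "1 / pi > y" using y by (smt (verit) pi_gt_zero zero_less_divide_1_iff)
  ultimately show ?thesis unfolding QH_tail_def using y by simp
qed

text \<open>The values of \<open>QH\<close>; the tail \<open>QH_tail y\<close> only depends on which of them exceed \<open>y\<close>.\<close>
definition QH_values :: "nat \<Rightarrow> (nat \<Rightarrow> real) \<Rightarrow> real set" where
  "QH_values J \<alpha> = insert 0 (insert (1/pi) ((\<lambda>j. 1 / \<alpha> j) ` {1..J}))"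

lemma finite_QH_values: "finite (QH_values J \<alpha>)"
  unfolding QH_values_def by simp

lemma QH_tail_cong:
  assumes "\<forall>c\<in>QH_values J \<alpha>. (c > y \<longleftrightarrow> c > y')"
  shows "QH_tail J \<delta> \<alpha> dm y = QH_tail J \<delta> \<alpha> dm y'"
proof -
  have "{j. 1 \<le> j \<and> j \<le> J \<and> 1 / \<alpha> j > y} = {j. 1 \<le> j \<and> j \<le> J \<and> 1 / \<alpha> j > y'}"
    using assms unfolding QH_values_def by auto
  moreover have "(1 / pi > y) = (1 / pi > y')" "(0 > y) = (0 > y')" using assms unfolding QH_values_def by auto
  ultimately show ?thesis unfolding QH_tail_def by simp
qed

lemma QH_tail_Max_values: "QH_tail J \<delta> \<alpha> dm (Max (QH_values J \<alpha>)) = 0"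
proof -
  have le: "c \<le> Max (QH_values J \<alpha>)" if "c \<in> QH_values J \<alpha>" for c
    using finite_QH_values that by simp
  have empty: "{j. 1 \<le> j \<and> j \<le> J \<and> 1 / \<alpha> j > Max (QH_values J \<alpha>)} = {}"
    using le unfolding QH_values_def by fastforce
  have "\<not> 1 / pi > Max (QH_values J \<alpha>)" "\<not> 0 > Max (QH_values J \<alpha>)"
    using le unfolding QH_values_def by force+
  thus ?thesis unfolding QH_tail_def empty by simp
qed

lemma QH_tail_round_down:
  assumes "0 \<le> y"
  obtains c where "c \<in> QH_values J \<alpha>" "c \<le> y" "QH_tail J \<delta> \<alpha> dm c = QH_tail J \<delta> \<alpha> dm y"
proof -
  define D where "D = {c\<in>QH_values J \<alpha>. c \<le> y}"
  have D: "finite D" "0 \<in> D" unfolding D_def QH_values_def using assms by auto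
  define c where "c = Max D"
  have c: "c \<in> D" "\<And>d. d \<in> D \<Longrightarrow> d \<le> c" unfolding c_def using D by (auto intro: Max_in)
  have "\<forall>d\<in>QH_values J \<alpha>. (d > y \<longleftrightarrow> d > c)"
    using c unfolding D_def by force
  thus ?thesis using that[of c] c(1) QH_tail_cong[of J \<alpha> y c] unfolding D_def by auto
qed

lemma QHT_attained:
  assumes apos: "\<forall>j\<in>{1..J}. 0 < \<alpha> j" and eps: "0 < \<epsilon>" "\<epsilon> < 1"
  shows "0 \<le> QHT \<epsilon> J \<delta> \<alpha> dm \<and> QH_tail J \<delta> \<alpha> dm (QHT \<epsilon> J \<delta> \<alpha> dm) \<le> \<epsilon>"
proof -
  let ?t = "QH_tail J \<delta> \<alpha> dm"
  define S where "S = {c\<in>QH_values J \<alpha>. ?t c \<le> \<epsilon>}"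
  have "Max (QH_values J \<alpha>) \<in> QH_values J \<alpha>"
    by (rule Max_in[OF finite_QH_values]) (simp add: QH_values_def)
  hence S: "finite S" "Max (QH_values J \<alpha>) \<in> S"
    unfolding S_def using finite_QH_values QH_tail_Max_values eps by auto
  have nonneg: "0 \<le> y" if "?t y \<le> \<epsilon>" for y
    using that eps QH_tail_neg[OF apos, of y] by force
  have "QHT \<epsilon> J \<delta> \<alpha> dm = Min S"
    unfolding QHT_def
  proof (rule Least_equality)
    show "?t (Min S) \<le> \<epsilon>" using S Min_in[of S] unfolding S_def by auto
    show "Min S \<le> y" if y: "?t y \<le> \<epsilon>" for y
    proof -
      obtain c where "c \<in> QH_values J \<alpha>" "c \<le> y" "?t c = ?t y"
        using QH_tail_round_down[OF nonneg[OF y]] by blast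
      hence "c \<in> S" unfolding S_def using y by simp
      thus ?thesis using S(1) \<open>c \<le> y\<close> by (meson Min_le order.trans)
    qed
  qed
  moreover have "?t (Min S) \<le> \<epsilon>" using S Min_in[of S] unfolding S_def by auto
  ultimately show ?thesis using nonneg by simp
qed

lemma QHT_tail_bound:
  assumes apos: "\<forall>j\<in>{1..J}. 0 < \<alpha> j" and eps: "0 < \<epsilon>" "\<epsilon> < 1" and T: "QHT \<epsilon> J \<delta> \<alpha> dm \<le> T"
  shows "0 \<le> T \<and> (\<Sum>j\<in>{j. 1 \<le> j \<and> j \<le> J \<and> 1 / \<alpha> j > T}. 2 * (\<delta> j)^2) \<le> \<epsilon>"
proof -
  let ?q = "QHT \<epsilon> J \<delta> \<alpha> dm"
  have q: "0 \<le> ?q" "QH_tail J \<delta> \<alpha> dm ?q \<le> \<epsilon>" using QHT_attained[OF apos eps] by auto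
  have "(\<Sum>j\<in>{j. 1 \<le> j \<and> j \<le> J \<and> 1 / \<alpha> j > T}. 2 * (\<delta> j)^2)
      \<le> (\<Sum>j\<in>{j. 1 \<le> j \<and> j \<le> J \<and> 1 / \<alpha> j > ?q}. 2 * (\<delta> j)^2)"
    using T by (intro sum_mono2) auto
  also have "\<dots> \<le> QH_tail J \<delta> \<alpha> dm ?q" unfolding QH_tail_def using q(1) by simp
  finally show ?thesis using q T by simp
qed

lemma pe_size_props:
  shows "\<exists>t. pe_size T = 2 ^ t" "2 * pi * T \<le> real (pe_size T)" "0 < pe_size T"
    "1 < pe_size T \<Longrightarrow> real (pe_size T) < 4 * pi * T"
proof -
  let ?P = "\<lambda>M. (\<exists>t. M = (2::nat) ^ t) \<and> 2 * pi * T \<le> real M"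
  obtain t where "2 * pi * T < 2 ^ t" using real_arch_pow[of 2 "2 * pi * T"] by auto
  hence ex: "?P (2 ^ t)" by auto
  have P: "?P (pe_size T)" unfolding pe_size_def by (rule LeastI[where P = ?P, OF ex])
  thus "\<exists>t. pe_size T = 2 ^ t" "2 * pi * T \<le> real (pe_size T)" by auto
  thus "0 < pe_size T" by auto
  assume gt: "1 < pe_size T"
  from P obtain s where s: "pe_size T = 2 ^ s" by auto
  have "s \<noteq> 0" using gt s by (cases s) auto
  then obtain s' where s': "s = Suc s'" by (cases s) auto
  have "2 ^ s' < pe_size T" using s s' by simp
  hence "\<not> ?P (2 ^ s')" unfolding pe_size_def by (rule not_less_Least)
  hence "real (2 ^ s') < 2 * pi * T" by auto
  moreover have "real (pe_size T) = 2 * real (2 ^ s')" using s s' by simp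
  ultimately show "real (pe_size T) < 4 * pi * T" by linarith
qed

lemma majority_rounds_bound:
  assumes eps: "0 < \<epsilon>" "\<epsilon> < 1" and k: "k = nat \<lceil>200 * ln (1 / \<epsilon>)\<rceil>"
  shows "(199/200::real) ^ k \<le> \<epsilon>"
proof -
  have kge: "200 * ln (1 / \<epsilon>) \<le> real k" using k by linarith
  have l: "ln (199/200::real) \<le> - 1/200" using ln_le_minus_one[of "199/200::real"] by simp
  have "(199/200::real) ^ k = exp (real k * ln (199/200))"
    by (simp add: exp_of_nat_mult)
  also have "\<dots> \<le> exp (real k * (-1/200))"
    using l by (intro exp_le_cancel_iff[THEN iffD2] mult_left_mono) auto
  also have "\<dots> \<le> exp (- ln (1 / \<epsilon>))" using kge by simp
  also have "\<dots> = \<epsilon>" using eps by (simp add: ln_div)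
  finally show ?thesis .
qed

lemma pe_size_pred_le:
  assumes "0 \<le> T"
  shows "real (pe_size T - 1) \<le> 4 * pi * T"
proof (cases "1 < pe_size T")
  case True
  thus ?thesis using pe_size_props(4)[OF True] by simp
next
  case False
  hence "pe_size T = 1" using pe_size_props(3)[of T] by simp
  thus ?thesis using assms by simp
qed

lemma Rotate_queries_le:
  assumes T: "0 \<le> T" and \<epsilon>: "0 < \<epsilon>" "\<epsilon> < exp (-1)"
  shows "real (Rotate_queries T (nat \<lceil>200 * ln (1 / \<epsilon>)\<rceil>)) \<le> 6000 * ln (1 / \<epsilon>) * T"
proof -
  let ?k = "nat \<lceil>200 * ln (1 / \<epsilon>)\<rceil>"
  have L: "1 < ln (1 / \<epsilon>)"
    using \<epsilon> ln_less_cancel_iff[of \<epsilon> "exp (-1)"] by (simp add: ln_div)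
  have k: "real ?k \<le> 201 * ln (1 / \<epsilon>)" using L by linarith
  have "4 * pi * T \<le> 4 * 3.2 * T" using pi_lt_3_2 T by (intro mult_right_mono) auto
  hence M: "real (pe_size T - 1) \<le> 13 * T" using pe_size_pred_le[OF T] T by linarith
  have "real (Rotate_queries T ?k) = 2 * real ?k * real (pe_size T - 1)"
    unfolding Rotate_queries_def by simp
  also have "\<dots> \<le> 2 * (201 * ln (1 / \<epsilon>)) * (13 * T)"
    using k M T L by (intro mult_mono) auto
  also have "\<dots> \<le> 6000 * ln (1 / \<epsilon>) * T"
    using L T by (simp add: mult_right_mono)
  finally show ?thesis .
qed

lemma cis_inj:
  assumes "- pi < a" "a < pi" "- pi < b" "b < pi" "cis a = cis b"
  shows "a = b"
proof -
  have c: "cos a = cos b" using assms(5) by (metis cis.sel(1))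
  have s: "sin a = sin b" using assms(5) by (metis cis.sel(2))
  have "cos \<bar>a\<bar> = cos \<bar>b\<bar>" using c by simp
  moreover have "0 \<le> \<bar>a\<bar>" "\<bar>a\<bar> \<le> pi" "0 \<le> \<bar>b\<bar>" "\<bar>b\<bar> \<le> pi" using assms by (simp_all add: abs_le_iff)
  ultimately have "\<bar>a\<bar> = \<bar>b\<bar>" using cos_inj_pi by blast
  hence "a = b \<or> b = - a" by linarith
  moreover have "a = 0" if "b = - a"
    using that s assms sin_eq_0_pi[of a] by simp
  ultimately show ?thesis by auto
qed

lemma Rotate_eigen_expansion_dist_sq:
  fixes U :: "complex mat" and \<psi> :: "'e \<Rightarrow> complex vec"
  assumes U: "U \<in> carrier_mat n n" "madj U * U = 1\<^sub>m n" and E: "finite E"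
    and ev: "\<And>e. e \<in> E \<Longrightarrow> \<psi> e \<in> carrier_vec n \<and> U *\<^sub>v \<psi> e = cis (ph e) \<cdot>\<^sub>v \<psi> e"
    and orth: "\<And>e e'. e \<in> E \<Longrightarrow> e' \<in> E \<Longrightarrow> e \<noteq> e' \<Longrightarrow> cinner n (\<psi> e) (\<psi> e') = 0"
    and v: "\<And>a. a < n \<Longrightarrow> v $ a = (\<Sum>e\<in>E. \<psi> e $ a * c e)"
    and w: "\<And>a. a < n \<Longrightarrow> w $ a = (\<Sum>e\<in>E. \<psi> e $ a * (s e * c e))"
  shows "(qdist n k (pe_size T) (Rotate n U T k (embed n k v)) (embed n k w))^2
       = (\<Sum>e\<in>E. (cmod (c e))^2 * vnorm2 (\<psi> e) * rotation_error (pe_size T) k (ph e) (s e))"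
proof -
  define M where "M = pe_size T"
  have M: "0 < M" unfolding M_def by (rule pe_size_props(3))
  define G where "G = (\<lambda>e. anc_pe_inv_all (cis (ph e)) M k (anc_flip M k (anc_pe_all (cis (ph e)) M k (\<lambda>xs. c e * anc_zero k xs))))"
  define h where "h = (\<lambda>e xs. G e xs - s e * c e * anc_zero k xs)"
  have car: "\<psi> e \<in> carrier_vec n" if "e \<in> E" for e using ev[OF that] by simp
  have ev': "madj U *\<^sub>v \<psi> e = cnj (cis (ph e)) \<cdot>\<^sub>v \<psi> e" if "e \<in> E" for e
    using madj_eigenvector[OF U] ev[OF that] by simp
  have "eigen_expansion n E \<psi> (\<lambda>e xs. c e * anc_zero k xs) (embed n k v)"
    unfolding eigen_expansion_def embed_def anc_zero_def using v by (auto simp: sum_distrib_right mult_ac)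
  hence "eigen_expansion n E \<psi> G (Rotate n U T k (embed n k v))"
    unfolding G_def M_def by (rule eigen_expansion_Rotate[OF _ U(1) madj_carrier[OF U(1)] ev ev'])
  hence diff: "Rotate n U T k (embed n k v) (a, xs) - embed n k w (a, xs) = (\<Sum>e\<in>E. \<psi> e $ a * h e xs)"
    if a: "a < n" for a xs
    using a w[OF a] unfolding eigen_expansion_def embed_def anc_zero_def h_def
    by (auto simp: sum_subtractf right_diff_distrib sum_distrib_right mult_ac)
  have "(qdist n k M (Rotate n U T k (embed n k v)) (embed n k w))^2
      = (\<Sum>a<n. \<Sum>xs\<in>anc_dom k M. (cmod (\<Sum>e\<in>E. \<psi> e $ a * h e xs))^2)"
    unfolding qdist_def by (simp add: diff sum_nonneg)
  also have "\<dots> = (\<Sum>xs\<in>anc_dom k M. \<Sum>a<n. (cmod (\<Sum>e\<in>E. \<psi> e $ a * h e xs))^2)"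
    by (rule sum.swap)
  also have "\<dots> = (\<Sum>xs\<in>anc_dom k M. \<Sum>e\<in>E. (cmod (h e xs))^2 * vnorm2 (\<psi> e))"
    by (rule sum.cong[OF refl], rule norm2_orthogonal_expansion[OF E car orth])
  also have "\<dots> = (\<Sum>e\<in>E. vnorm2 (\<psi> e) * anc_norm2 k M (h e))"
    unfolding anc_norm2_def by (subst sum.swap) (simp add: sum_distrib_left mult_ac)
  also have "\<dots> = (\<Sum>e\<in>E. (cmod (c e))^2 * vnorm2 (\<psi> e) * rotation_error M k (ph e) (s e))"
    unfolding h_def G_def anc_norm2_rotation[OF M] by (simp add: mult_ac)
  finally show ?thesis unfolding M_def .
qed

text \<open>Each eigencomponent whose phase is resolved at precision \<open>2 pi / M\<close> is rotated correctly up to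
  \<open>(199/200)^k \<le> \<epsilon>\<close>; the unresolved ones are wrong by at most \<open>2\<close>, but carry weight \<open>\<le> \<epsilon>\<close>.\<close>
lemma Rotate_eigen_expansion_dist_le:
  fixes U :: "complex mat" and \<psi> :: "'e \<Rightarrow> complex vec"
  assumes U: "U \<in> carrier_mat n n" "madj U * U = 1\<^sub>m n" and E: "finite E"
    and ev: "\<And>e. e \<in> E \<Longrightarrow> \<psi> e \<in> carrier_vec n \<and> U *\<^sub>v \<psi> e = cis (ph e) \<cdot>\<^sub>v \<psi> e"
    and ph: "\<And>e. e \<in> E \<Longrightarrow> \<bar>ph e\<bar> \<le> pi / 2" and inj: "inj_on ph E"
    and \<psi>: "\<And>e. e \<in> E \<Longrightarrow> vnorm2 (\<psi> e) \<le> 1"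
    and v: "\<And>a. a < n \<Longrightarrow> v $ a = (\<Sum>e\<in>E. \<psi> e $ a * c e)" and v_norm: "(\<Sum>a<n. (cmod (v $ a))^2) \<le> 1"
    and w: "\<And>a. a < n \<Longrightarrow> w $ a = (\<Sum>e\<in>E. \<psi> e $ a * ((if ph e < 0 then -1 else 1) * c e))"
    and unresolved: "(\<Sum>e\<in>{e\<in>E. ph e \<noteq> 0 \<and> \<bar>ph e\<bar> < 2 * pi / real (pe_size T)}. (cmod (c e))^2) \<le> \<epsilon>"
    and k: "(199/200)^k \<le> \<epsilon>"
  shows "qdist n k (pe_size T) (Rotate n U T k (embed n k v)) (embed n k w) \<le> sqrt (8 * \<epsilon>)"
proof -
  define M where "M = pe_size T"
  have M: "0 < M" unfolding M_def by (rule pe_size_props(3))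
  have \<epsilon>: "0 \<le> \<epsilon>" using k zero_le_power[of "199/200::real" k] by linarith
  define bad where "bad = (\<lambda>e. ph e \<noteq> 0 \<and> \<bar>ph e\<bar> < 2 * pi / real M)"
  define s where "s = (\<lambda>e. if ph e < 0 then -1 else 1 :: complex)"
  have w': "w $ a = (\<Sum>e\<in>E. \<psi> e $ a * (s e * c e))" if "a < n" for a
    using w[OF that] unfolding s_def .
  have orth: "cinner n (\<psi> e) (\<psi> e') = 0" if e: "e \<in> E" "e' \<in> E" "e \<noteq> e'" for e e'
  proof (rule unitary_eigenvectors_orthogonal[OF U])
    show "\<psi> e \<in> carrier_vec n" "\<psi> e' \<in> carrier_vec n" "U *\<^sub>v \<psi> e = cis (ph e) \<cdot>\<^sub>v \<psi> e"
      "U *\<^sub>v \<psi> e' = cis (ph e') \<cdot>\<^sub>v \<psi> e'" using ev e by auto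
    have "ph e \<noteq> ph e'" using inj e by (auto dest: inj_onD)
    moreover have "- pi < ph e" "ph e < pi" "- pi < ph e'" "ph e' < pi"
      using ph[OF e(1)] ph[OF e(2)] pi_gt_zero by linarith+
    ultimately show "cis (ph e) \<noteq> cis (ph e')" using cis_inj by blast
  qed simp
  have weights: "(\<Sum>e\<in>E. (cmod (c e))^2 * vnorm2 (\<psi> e)) \<le> 1"
    using norm2_orthogonal_expansion[OF E _ orth, where h = c] ev v v_norm by simp
  have component: "(cmod (c e))^2 * vnorm2 (\<psi> e) * rotation_error M k (ph e) (s e)
      \<le> 4 * \<epsilon> * ((cmod (c e))^2 * vnorm2 (\<psi> e)) + 4 * (if bad e then (cmod (c e))^2 else 0)"
    if e: "e \<in> E" for e
  proof -
    have nn: "0 \<le> (cmod (c e))^2 * vnorm2 (\<psi> e)" "0 \<le> \<epsilon>"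
      using \<epsilon> by (simp_all add: vnorm2_def sum_nonneg)
    show ?thesis
    proof (cases "bad e")
      case True
      have "(cmod (c e))^2 * vnorm2 (\<psi> e) * rotation_error M k (ph e) (s e) \<le> (cmod (c e))^2 * 1 * 4"
        using \<psi>[OF e] rotation_error_le_4[OF M, of "s e"] rotation_error_nonneg
        by (intro mult_mono) (auto simp: s_def vnorm2_def sum_nonneg)
      moreover have "0 \<le> 4 * \<epsilon> * ((cmod (c e))^2 * vnorm2 (\<psi> e))" using nn by simp
      ultimately show ?thesis using True by (simp add: mult_ac)
    next
      case False
      hence "rotation_error M k (ph e) (s e) \<le> 4 * \<epsilon>"
        using rotation_error_le_resolved[OF M, of "ph e" k] ph[OF e] k unfolding bad_def s_def by linarith
      hence "(cmod (c e))^2 * vnorm2 (\<psi> e) * rotation_error M k (ph e) (s e)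
          \<le> (cmod (c e))^2 * vnorm2 (\<psi> e) * (4 * \<epsilon>)" using nn by (intro mult_left_mono)
      thus ?thesis using False by (simp add: mult_ac)
    qed
  qed
  have "(qdist n k M (Rotate n U T k (embed n k v)) (embed n k w))^2
      = (\<Sum>e\<in>E. (cmod (c e))^2 * vnorm2 (\<psi> e) * rotation_error M k (ph e) (s e))"
    unfolding M_def by (rule Rotate_eigen_expansion_dist_sq[OF U E ev orth v w'])
  also have "\<dots> \<le> (\<Sum>e\<in>E. 4 * \<epsilon> * ((cmod (c e))^2 * vnorm2 (\<psi> e)) + 4 * (if bad e then (cmod (c e))^2 else 0))"
    using component by (rule sum_mono)
  also have "\<dots> = 4 * \<epsilon> * (\<Sum>e\<in>E. (cmod (c e))^2 * vnorm2 (\<psi> e)) + 4 * (\<Sum>e\<in>{e\<in>E. bad e}. (cmod (c e))^2)"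
    using E by (simp add: sum.distrib sum_distrib_left sum.inter_filter)
  also have "\<dots> \<le> 4 * \<epsilon> * 1 + 4 * \<epsilon>"
    using weights unresolved \<epsilon> unfolding bad_def M_def by (intro add_mono mult_left_mono) auto
  finally have "(qdist n k M (Rotate n U T k (embed n k v)) (embed n k w))^2 \<le> 8 * \<epsilon>" by simp
  moreover have "0 \<le> qdist n k M (Rotate n U T k (embed n k v)) (embed n k w)"
    unfolding qdist_def by (intro real_sqrt_ge_zero sum_nonneg) auto
  ultimately show ?thesis unfolding M_def using real_le_rsqrt by blast
qed

lemma eigenvalue_Re_nonneg:
  assumes eig: "\<forall>z. eigenvalue U z \<longrightarrow> (\<exists>a. - (pi / 2) \<le> a \<and> a \<le> pi / 2 \<and> z = cis a)"
    and U: "U \<in> carrier_mat n n" and v: "unit_cvec n v" and Uv: "U *\<^sub>v v = z \<cdot>\<^sub>v v"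
  shows "0 \<le> Re z"
proof -
  have "v \<noteq> 0\<^sub>v n" using v unfolding unit_cvec_def vnorm2_def by auto
  hence "eigenvalue U z" using U v Uv unfolding eigenvalue_def eigenvector_def unit_cvec_def by blast
  then obtain a where "- (pi / 2) \<le> a" "a \<le> pi / 2" "z = cis a" using eig by blast
  thus ?thesis using cos_ge_zero by simp
qed

lemma cos_nonneg_imp_le_pi_half:
  assumes "0 < x" "x < pi" "0 \<le> cos x"
  shows "x \<le> pi / 2"
proof (rule ccontr)
  assume "\<not> x \<le> pi / 2"
  hence "0 < cos (pi - x)" using assms by (intro cos_gt_zero) auto
  thus False using assms by simp
qed

lemma eigenphase_le_pi_half:
  assumes eig: "\<forall>z. eigenvalue U z \<longrightarrow> (\<exists>a. - (pi / 2) \<le> a \<and> a \<le> pi / 2 \<and> z = cis a)"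
    and U: "U \<in> carrier_mat n n" and v: "unit_cvec n v" "U *\<^sub>v v = cis \<theta> \<cdot>\<^sub>v v"
    and \<theta>: "0 < \<theta>" "\<theta> < pi"
  shows "\<theta> \<le> pi / 2"
  using eigenvalue_Re_nonneg[OF eig U v] cos_nonneg_imp_le_pi_half[OF \<theta>] by simp

lemma no_eigenvalue_minus_one:
  assumes eig: "\<forall>z. eigenvalue U z \<longrightarrow> (\<exists>a. - (pi / 2) \<le> a \<and> a \<le> pi / 2 \<and> z = cis a)"
    and U: "U \<in> carrier_mat n n" and v: "unit_cvec n v" "U *\<^sub>v v = - v"
  shows False
proof -
  have "U *\<^sub>v v = (-1) \<cdot>\<^sub>v v" using v(2) by (auto intro: eq_vecI)
  from eigenvalue_Re_nonneg[OF eig U v(1) this] show False by simp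
qed

lemma norm2_proj_complement_le:
  fixes x \<mu> :: "real vec"
  assumes "x \<in> carrier_vec n" "\<mu> \<in> carrier_vec n" "\<mu> \<bullet> \<mu> = 1" "x \<bullet> x = 1"
  shows "(\<Sum>a<n. (cmod (vec n (\<lambda>i. complex_of_real (x $ i - (\<mu> \<bullet> x) * \<mu> $ i)) $ a))^2) \<le> 1"
proof -
  define m where "m = \<mu> \<bullet> x"
  have dot: "u \<bullet> y = (\<Sum>a<n. u $ a * y $ a)" if "y \<in> carrier_vec n" for u y :: "real vec"
    using that by (simp add: scalar_prod_def lessThan_atLeast0)
  have "(\<Sum>a<n. (cmod (vec n (\<lambda>i. complex_of_real (x $ i - m * \<mu> $ i)) $ a))^2) = (\<Sum>a<n. (x $ a - m * \<mu> $ a)^2)"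
    by (intro sum.cong refl) (simp only: lessThan_iff index_vec norm_of_real power2_abs)
  also have "\<dots> = (\<Sum>a<n. x $ a * x $ a) - 2 * m * (\<Sum>a<n. \<mu> $ a * x $ a) + m^2 * (\<Sum>a<n. \<mu> $ a * \<mu> $ a)"
    by (simp add: power2_eq_square algebra_simps sum.distrib sum_subtractf sum_distrib_left)
  also have "\<dots> = 1 - m^2"
    using assms unfolding dot[OF assms(1)] dot[OF assms(2)] m_def by (simp add: power2_eq_square)
  finally show ?thesis unfolding m_def by simp
qed

text \<open>The index \<open>e \<in> {-J..J}\<close> enumerates the eigencomponents of the decomposition: \<open>0\<close> for the
  \<open>1\<close>-eigenvector, \<open>j\<close> and \<open>-j\<close> for the conjugate pair of eigenphases \<open>\<plusminus>\<alpha> j\<close>.\<close>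
definition sym_family :: "'a \<Rightarrow> (nat \<Rightarrow> 'a) \<Rightarrow> (nat \<Rightarrow> 'a) \<Rightarrow> int \<Rightarrow> 'a" where
  "sym_family x0 xp xm e = (if e = 0 then x0 else if 0 < e then xp (nat e) else xm (nat (- e)))"

lemma sym_family_simps [simp]:
  "sym_family x0 xp xm 0 = x0"
  "0 < j \<Longrightarrow> sym_family x0 xp xm (int j) = xp j"
  "0 < j \<Longrightarrow> sym_family x0 xp xm (- int j) = xm j"
  unfolding sym_family_def by auto

lemma sum_symmetric_int_interval:
  fixes F :: "int \<Rightarrow> 'a :: comm_monoid_add"
  shows "(\<Sum>e\<in>{- int J..int J}. F e) = F 0 + (\<Sum>j\<in>{1..J}. F (int j) + F (- int j))"
proof (induction J)
  case (Suc J)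
  have "{- int (Suc J)..int (Suc J)} = insert (int (Suc J)) (insert (- int (Suc J)) {- int J..int J})" by auto
  thus ?case using Suc by (simp add: add_ac)
qed simp

lemma sym_family_rel:
  assumes "R x0 y0" "\<And>j. j \<in> {1..J} \<Longrightarrow> R (xp j) (yp j)" "\<And>j. j \<in> {1..J} \<Longrightarrow> R (xm j) (ym j)"
    and "e \<in> {- int J..int J}"
  shows "R (sym_family x0 xp xm e) (sym_family y0 yp ym e)"
proof -
  consider "e = 0" | "0 < e" | "e < 0" by linarith
  thus ?thesis
  proof cases
    case 2
    hence "nat e \<in> {1..J}" using assms(4) by auto
    thus ?thesis using assms(2) 2 unfolding sym_family_def by auto
  next
    case 3
    hence "nat (- e) \<in> {1..J}" using assms(4) by auto
    thus ?thesis using assms(3) 3 unfolding sym_family_def by auto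
  qed (use assms(1) in \<open>simp add: sym_family_def\<close>)
qed

lemma sym_family_pred:
  assumes "P x0" "\<And>j. j \<in> {1..J} \<Longrightarrow> P (xp j)" "\<And>j. j \<in> {1..J} \<Longrightarrow> P (xm j)"
    and "e \<in> {- int J..int J}"
  shows "P (sym_family x0 xp xm e)"
  using sym_family_rel[where R = "\<lambda>x _. P x", OF assms] .

lemma inj_on_sym_phases:
  fixes \<alpha> :: "nat \<Rightarrow> real"
  assumes "inj_on \<alpha> {1..J}" and "\<And>j. j \<in> {1..J} \<Longrightarrow> 0 < \<alpha> j"
  shows "inj_on (sym_family 0 \<alpha> (\<lambda>j. - \<alpha> j)) {- int J..int J}"
proof (rule inj_onI)
  let ?ph = "sym_family 0 \<alpha> (\<lambda>j. - \<alpha> j)"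
  fix e e' assume e: "e \<in> {- int J..int J}" "e' \<in> {- int J..int J}" and eq: "?ph e = ?ph e'"
  have ph: "sgn (?ph d) = of_int (sgn d) \<and> \<bar>?ph d\<bar> = (if d = 0 then 0 else \<alpha> (nat \<bar>d\<bar>))"
    if "d \<in> {- int J..int J}" for d
  proof -
    have pos: "0 < \<alpha> (nat \<bar>d\<bar>)" if "d \<noteq> 0" using that \<open>d \<in> _\<close> by (intro assms(2)) auto
    consider "d = 0" | "0 < d" | "d < 0" by linarith
    thus ?thesis
    proof cases
      case 2 thus ?thesis using pos by (simp add: sym_family_def)
    next
      case 3 thus ?thesis using pos by (simp add: sym_family_def)
    qed (simp add: sym_family_def)
  qed
  have "(of_int (sgn e) :: real) = of_int (sgn e')"
    using conjunct1[OF ph[OF e(1)]] conjunct1[OF ph[OF e(2)]] eq by simp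
  hence sgn_eq: "sgn e = sgn e'" by (simp only: of_int_eq_iff)
  have "\<bar>e\<bar> = \<bar>e'\<bar>"
  proof (cases "e = 0")
    case True
    thus ?thesis using sgn_eq by (simp add: sgn_0_0)
  next
    case False
    have e': "e' \<noteq> 0"
    proof
      assume "e' = 0"
      hence "sgn e = 0" using sgn_eq by simp
      thus False using False by (simp add: sgn_0_0)
    qed
    hence "\<alpha> (nat \<bar>e\<bar>) = \<alpha> (nat \<bar>e'\<bar>)"
      using conjunct2[OF ph[OF e(1)]] conjunct2[OF ph[OF e(2)]] eq False by simp
    moreover have "nat \<bar>e\<bar> \<in> {1..J}" "nat \<bar>e'\<bar> \<in> {1..J}" using e False e' by auto
    ultimately have "nat \<bar>e\<bar> = nat \<bar>e'\<bar>" using inj_onD[OF assms(1)] by blast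
    thus ?thesis by simp
  qed
  thus "e = e'" using sgn_eq by (metis sgn_mult_abs)
qed

lemma unresolved_weight_le_QH_tail:
  fixes \<delta> \<alpha> :: "nat \<Rightarrow> real" and \<delta>0 :: real
  assumes \<alpha>: "\<And>j. j \<in> {1..J} \<Longrightarrow> 0 < \<alpha> j" and M: "2 * pi * T \<le> real M" "0 < M"
  defines "ph \<equiv> sym_family 0 \<alpha> (\<lambda>j. - \<alpha> j)"
    and "c \<equiv> sym_family (complex_of_real \<delta>0) (\<lambda>j. complex_of_real (\<delta> j)) (\<lambda>j. complex_of_real (\<delta> j))"
  shows "(\<Sum>e\<in>{e\<in>{- int J..int J}. ph e \<noteq> 0 \<and> \<bar>ph e\<bar> < 2 * pi / real M}. (cmod (c e))^2)
     \<le> (\<Sum>j\<in>{j. 1 \<le> j \<and> j \<le> J \<and> 1 / \<alpha> j > T}. 2 * (\<delta> j)^2)"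
proof -
  define F where "F = (\<lambda>e. if ph e \<noteq> 0 \<and> \<bar>ph e\<bar> < 2 * pi / real M then (cmod (c e))^2 else 0)"
  have unresolved: "1 / \<alpha> j > T" if "j \<in> {1..J}" "\<alpha> j < 2 * pi / real M" for j
  proof (cases "0 < T")
    case True
    have "\<alpha> j * T < 2 * pi / real M * T" using that True by (intro mult_strict_right_mono) auto
    also have "\<dots> \<le> 1" using M True by (simp add: field_simps)
    finally show ?thesis using \<alpha>[OF that(1)] by (simp add: field_simps)
  qed (use \<alpha> that in \<open>simp add: not_less order.strict_trans1\<close>)
  have pair: "F (int j) + F (- int j) = (if \<alpha> j < 2 * pi / real M then 2 * (\<delta> j)^2 else 0)"
    if "j \<in> {1..J}" for j
    using \<alpha>[OF that] that unfolding F_def ph_def c_def by simp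
  have "(\<Sum>e\<in>{e\<in>{- int J..int J}. ph e \<noteq> 0 \<and> \<bar>ph e\<bar> < 2 * pi / real M}. (cmod (c e))^2)
      = F 0 + (\<Sum>j\<in>{1..J}. F (int j) + F (- int j))"
    unfolding sum.inter_filter[OF finite_atLeastAtMost_int] F_def by (rule sum_symmetric_int_interval)
  also have "\<dots> = (\<Sum>j\<in>{1..J}. if \<alpha> j < 2 * pi / real M then 2 * (\<delta> j)^2 else 0)"
    using pair by (simp add: F_def ph_def)
  also have "\<dots> \<le> (\<Sum>j\<in>{1..J}. if 1 / \<alpha> j > T then 2 * (\<delta> j)^2 else 0)"
    using unresolved by (intro sum_mono) auto
  also have "\<dots> = (\<Sum>j\<in>{j. 1 \<le> j \<and> j \<le> J \<and> 1 / \<alpha> j > T}. 2 * (\<delta> j)^2)"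
    by (subst sum.inter_filter[symmetric]) (auto intro!: sum.cong)
  finally show ?thesis .
qed

lemma vnorm2_map_cnj [simp]: "vnorm2 (map_vec cnj v) = vnorm2 v"
  unfolding vnorm2_def by simp

lemma vnorm2_zero_vec [simp]: "vnorm2 (0\<^sub>v n) = 0"
  unfolding vnorm2_def by simp

lemma Rotate_walk_accuracy:
  fixes n J k :: nat and \<epsilon> T :: real and U2 :: "real mat" and \<phi>0 \<mu> :: "real vec" and \<delta>0 \<delta>m1 :: real and \<delta> \<alpha> :: "nat \<Rightarrow> real"
    and w0 wm1 :: "complex vec" and wp wm :: "nat \<Rightarrow> complex vec"
  defines "U \<equiv> cmat U2 * cmat (reflection n \<mu>)"
    and "\<phi>t \<equiv> vec n (\<lambda>i. complex_of_real (\<phi>0 $ i - (\<mu> \<bullet> \<phi>0) * \<mu> $ i))"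
    and "rot \<equiv> vec n (\<lambda>i. complex_of_real \<delta>0 * w0 $ i
                 + (\<Sum>j\<in>{1..J}. complex_of_real (\<delta> j) * (wp j $ i - wm j $ i))
                 + complex_of_real \<delta>m1 * wm1 $ i)"
    and "k \<equiv> nat \<lceil>200 * ln (1 / \<epsilon>)\<rceil>"
  assumes U2: "U2 \<in> carrier_mat n n" "U2 * transpose_mat U2 = 1\<^sub>m n"
    and \<phi>0: "\<phi>0 \<in> carrier_vec n" "\<phi>0 \<bullet> \<phi>0 = 1" and \<mu>: "\<mu> \<in> carrier_vec n" "\<mu> \<bullet> \<mu> = 1"
    and \<epsilon>: "0 < \<epsilon>" "\<epsilon> < 1"
    and eig: "\<forall>z. eigenvalue U z \<longrightarrow> (\<exists>a. - (pi / 2) \<le> a \<and> a \<le> pi / 2 \<and> z = cis a)"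
    and w0: "w0 \<in> carrier_vec n" "\<delta>0 \<noteq> 0 \<longrightarrow> unit_cvec n w0 \<and> U *\<^sub>v w0 = w0"
    and wm1: "\<delta>m1 \<noteq> 0 \<longrightarrow> unit_cvec n wm1 \<and> U *\<^sub>v wm1 = - wm1"
    and wpm: "\<forall>j\<in>{1..J}. 0 < \<alpha> j \<and> \<alpha> j < pi \<and> unit_cvec n (wp j)
           \<and> U *\<^sub>v wp j = cis (\<alpha> j) \<cdot>\<^sub>v wp j \<and> U *\<^sub>v wm j = cis (- \<alpha> j) \<cdot>\<^sub>v wm j
           \<and> wm j = map_vec cnj (wp j)"
    and inj: "inj_on \<alpha> {1..J}"
    and dec: "\<forall>i<n. \<phi>t $ i = complex_of_real \<delta>0 * w0 $ i
                 + (\<Sum>j\<in>{1..J}. complex_of_real (\<delta> j) * (wp j $ i + wm j $ i))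
                 + complex_of_real \<delta>m1 * wm1 $ i"
    and T: "T \<ge> QHT \<epsilon> J \<delta> \<alpha> \<delta>m1"
  shows "qdist n k (pe_size T) (Rotate n U T k (embed n k \<phi>t)) (embed n k rot) \<le> 6000 * sqrt \<epsilon>
     \<and> (\<epsilon> < exp (-1) \<longrightarrow> real (Rotate_queries T k) \<le> 6000 * ln (1 / \<epsilon>) * T)"
proof -
  let ?E = "{- int J..int J}"
  define \<psi> where "\<psi> = sym_family (if \<delta>0 = 0 then 0\<^sub>v n else w0) wp wm"
  define c where "c = sym_family (complex_of_real \<delta>0) (\<lambda>j. complex_of_real (\<delta> j)) (\<lambda>j. complex_of_real (\<delta> j))"
  define ph where "ph = sym_family 0 \<alpha> (\<lambda>j. - \<alpha> j)"
  have U: "U \<in> carrier_mat n n" unfolding U_def using U2(1) reflection_carrier[of n \<mu>] by simp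
  have unitary: "madj U * U = 1\<^sub>m n" unfolding U_def by (rule unitary_walk[OF U2 \<mu>])
  have wp: "unit_cvec n (wp j) \<and> unit_cvec n (wm j)" if "j \<in> {1..J}" for j
  proof -
    have "unit_cvec n (wp j)" "wm j = map_vec cnj (wp j)" using bspec[OF wpm that] by blast+
    thus ?thesis unfolding unit_cvec_def by simp
  qed
  have \<alpha>: "0 < \<alpha> j \<and> \<alpha> j \<le> pi / 2" if "j \<in> {1..J}" for j
    using bspec[OF wpm that] eigenphase_le_pi_half[OF eig U conjunct1[OF wp[OF that]]] by blast
  have \<delta>m1: "\<delta>m1 = 0" using wm1 no_eigenvalue_minus_one[OF eig U] by blast
  have eigenpair: "wp j \<in> carrier_vec n \<and> U *\<^sub>v wp j = cis (\<alpha> j) \<cdot>\<^sub>v wp j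
      \<and> wm j \<in> carrier_vec n \<and> U *\<^sub>v wm j = cis (- \<alpha> j) \<cdot>\<^sub>v wm j" if "j \<in> {1..J}" for j
    using bspec[OF wpm that] wp[OF that] unfolding unit_cvec_def by blast
  have ev: "\<psi> e \<in> carrier_vec n \<and> U *\<^sub>v \<psi> e = cis (ph e) \<cdot>\<^sub>v \<psi> e" if "e \<in> ?E" for e
    unfolding \<psi>_def ph_def using w0 eigenpair U
    by (intro sym_family_rel[OF _ _ _ that, where R = "\<lambda>v a. v \<in> carrier_vec n \<and> U *\<^sub>v v = cis a \<cdot>\<^sub>v v"])
      (auto simp: unit_cvec_def)
  have \<psi>: "vnorm2 (\<psi> e) \<le> 1" if "e \<in> ?E" for e
    unfolding \<psi>_def
    by (rule sym_family_pred[where P = "\<lambda>v. vnorm2 v \<le> 1", OF _ _ _ that]) (use w0 wp in \<open>auto simp: unit_cvec_def\<close>)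
  have ph: "\<bar>ph e\<bar> \<le> pi / 2" if "e \<in> ?E" for e
  proof -
    have "\<bar>\<alpha> j\<bar> \<le> pi / 2" if "j \<in> {1..J}" for j using \<alpha>[OF that] by simp
    thus ?thesis unfolding ph_def
      by (intro sym_family_pred[where P = "\<lambda>a. \<bar>a\<bar> \<le> pi / 2", OF _ _ _ that]) auto
  qed
  have v: "\<phi>t $ a = (\<Sum>e\<in>?E. \<psi> e $ a * c e)" if "a < n" for a
    using dec that \<delta>m1 unfolding sum_symmetric_int_interval \<psi>_def c_def by (simp add: algebra_simps)
  have w: "rot $ a = (\<Sum>e\<in>?E. \<psi> e $ a * ((if ph e < 0 then -1 else 1) * c e))" if "a < n" for a
  proof -
    have "0 < \<alpha> j" "\<not> \<alpha> j < 0" if "j \<in> {1..J}" for j using \<alpha>[OF that] by simp_all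
    thus ?thesis using that \<delta>m1 unfolding sum_symmetric_int_interval \<psi>_def c_def ph_def rot_def by (simp add: algebra_simps)
  qed
  have v_norm: "(\<Sum>a<n. (cmod (\<phi>t $ a))^2) \<le> 1"
    unfolding \<phi>t_def by (rule norm2_proj_complement_le[OF \<phi>0(1) \<mu> \<phi>0(2)])
  have "(\<Sum>e\<in>{e\<in>?E. ph e \<noteq> 0 \<and> \<bar>ph e\<bar> < 2 * pi / real (pe_size T)}. (cmod (c e))^2)
      \<le> (\<Sum>j\<in>{j. 1 \<le> j \<and> j \<le> J \<and> 1 / \<alpha> j > T}. 2 * (\<delta> j)^2)"
    unfolding ph_def c_def by (rule unresolved_weight_le_QH_tail) (use \<alpha> pe_size_props(2,3) in auto)
  also have "\<dots> \<le> \<epsilon>" using QHT_tail_bound[OF _ \<epsilon> T] \<alpha> by auto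
  finally have unresolved: "(\<Sum>e\<in>{e\<in>?E. ph e \<noteq> 0 \<and> \<bar>ph e\<bar> < 2 * pi / real (pe_size T)}. (cmod (c e))^2) \<le> \<epsilon>" .
  have "qdist n k (pe_size T) (Rotate n U T k (embed n k \<phi>t)) (embed n k rot) \<le> sqrt (8 * \<epsilon>)"
    by (rule Rotate_eigen_expansion_dist_le[OF U unitary _ ev ph _ \<psi> v v_norm w unresolved])
      (use \<alpha> \<epsilon> in \<open>auto simp: ph_def k_def majority_rounds_bound intro!: inj_on_sym_phases inj\<close>)
  also have "\<dots> = sqrt 8 * sqrt \<epsilon>" by (simp add: real_sqrt_mult)
  also have "\<dots> \<le> 6000 * sqrt \<epsilon>"
    using real_sqrt_le_mono[of 8 "6000\<^sup>2"] \<epsilon> by (intro mult_right_mono) auto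
  finally have dist: "qdist n k (pe_size T) (Rotate n U T k (embed n k \<phi>t)) (embed n k rot) \<le> 6000 * sqrt \<epsilon>" .
  have "0 \<le> T" using QHT_tail_bound[OF _ \<epsilon> T] \<alpha> by auto
  thus ?thesis using dist Rotate_queries_le[of T \<epsilon>] \<epsilon> unfolding k_def by auto
qed

theorem theorem7:
  shows "\<exists>c::real. c > 0 \<and> (\<exists>C::real. C > 0 \<and> (\<exists>\<epsilon>0::real. \<epsilon>0 > 0 \<and>
   (\<forall>(n::nat) (U2::real mat) (\<phi>0::real vec) (\<mu>::real vec) (\<epsilon>::real) (T::real)
      (J::nat) (\<delta>0::real) (\<delta>::nat \<Rightarrow> real) (\<delta>m1::real) (\<alpha>::nat \<Rightarrow> real)
      (w0::complex vec) (wm1::complex vec) (wp::nat \<Rightarrow> complex vec) (wm::nat \<Rightarrow> complex vec).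
    let U = cmat U2 * cmat (reflection n \<mu>);
        \<phi>t = vec n (\<lambda>i. complex_of_real (\<phi>0 $ i - (\<mu> \<bullet> \<phi>0) * \<mu> $ i));
        rot = vec n (\<lambda>i. complex_of_real \<delta>0 * w0 $ i
                 + (\<Sum>j\<in>{1..J}. complex_of_real (\<delta> j) * (wp j $ i - wm j $ i))
                 + complex_of_real \<delta>m1 * wm1 $ i);
        k = nat \<lceil>c * ln (1 / \<epsilon>)\<rceil>
    in
    (U2 \<in> carrier_mat n n \<and> U2 * transpose_mat U2 = 1\<^sub>m n
     \<and> \<phi>0 \<in> carrier_vec n \<and> U2 *\<^sub>v \<phi>0 = \<phi>0 \<and> \<phi>0 \<bullet> \<phi>0 = 1
     \<and> (\<forall>v \<in> carrier_vec n. cmat U2 *\<^sub>v v = v \<longrightarrow> (\<exists>a::complex. v = a \<cdot>\<^sub>v cvec \<phi>0))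
     \<and> \<mu> \<in> carrier_vec n \<and> \<mu> \<bullet> \<mu> = 1
     \<and> 0 < \<epsilon> \<and> \<epsilon> < 1
     \<and> (\<forall>z. eigenvalue U z \<longrightarrow> (\<exists>a. - (pi / 2) \<le> a \<and> a \<le> pi / 2 \<and> z = cis a))
     \<and> w0 \<in> carrier_vec n \<and> (\<delta>0 \<noteq> 0 \<longrightarrow> unit_cvec n w0 \<and> U *\<^sub>v w0 = w0)
     \<and> wm1 \<in> carrier_vec n \<and> (\<delta>m1 \<noteq> 0 \<longrightarrow> unit_cvec n wm1 \<and> U *\<^sub>v wm1 = - wm1)
     \<and> (\<forall>j\<in>{1..J}. 0 < \<alpha> j \<and> \<alpha> j < pi \<and> unit_cvec n (wp j)
           \<and> U *\<^sub>v wp j = cis (\<alpha> j) \<cdot>\<^sub>v wp j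
           \<and> U *\<^sub>v wm j = cis (- \<alpha> j) \<cdot>\<^sub>v wm j
           \<and> wm j = map_vec cnj (wp j))
     \<and> inj_on \<alpha> {1..J}
     \<and> (\<forall>i<n. \<phi>t $ i = complex_of_real \<delta>0 * w0 $ i
                 + (\<Sum>j\<in>{1..J}. complex_of_real (\<delta> j) * (wp j $ i + wm j $ i))
                 + complex_of_real \<delta>m1 * wm1 $ i)
     \<and> T \<ge> QHT \<epsilon> J \<delta> \<alpha> \<delta>m1)
    \<longrightarrow>
    (qdist n k (pe_size T) (Rotate n U T k (embed n k \<phi>t)) (embed n k rot) \<le> C * sqrt \<epsilon>
     \<and> (\<epsilon> < \<epsilon>0 \<longrightarrow> real (Rotate_queries T k) \<le> C * ln (1 / \<epsilon>) * T)))))"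
  unfolding Let_def
  by (rule exI[of _ 200], rule conjI, simp, rule exI[of _ 6000], rule conjI, simp,
      rule exI[of _ "exp (-1)"], rule conjI, simp, intro allI impI, elim conjE,
      rule Rotate_walk_accuracy; assumption)

end
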